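(* Let $\Gamma$ be a connected $\mathbf{Top}$-graph with more than one vertex, let $T\subseteq\Gamma$ be a maximal tree, and let $v\in\Gamma_0$. Let $\Gamma/T$ be the quotient space of the edge space $\Gamma$ obtained by collapsing the (nonempty) edge set $T$ to a single point, taken as basepoint $\ast$. Then the vertex group $\mathscr F(\Gamma)(v)=\mathscr F(\Gamma)(v,v)$ of the free $\mathbf{Top}$-groupoid is isomorphic, as a topological group, to the free Graev topological group $F_G(\Gamma/T,\ast)$.
   Context: A $\mathbf{Top}$-graph $\Gamma$ consists of a discrete vertex space $\Gamma_0$, an edge space $\Gamma$ and continuous maps $\partial_0,\partial_1:\Gamma\to\Gamma_0$; $\Gamma(x,y)=\partial_0^{-1}(x)\cap\partial_1^{-1}(y)$. Its realization is $|\Gamma|=\Gamma_0\sqcup(\Gamma\times[0,1])/((\alpha,i)\sim\partial_i(\alpha))$; $\Gamma$ is connected if $|\Gamma|$ is path connected. A tree is a $\mathbf{Top}$-graph with discrete edge space and contractible realization; a maximal tree in $\Gamma$ is a sub-$\mathbf{Top}$-graph $T$ which is a tree with $T_0=\Gamma_0$. A $\mathbf{Top}$-groupoid is a groupoid with discrete object set, topologized hom-sets, and continuous composition and inversion. The free $\mathbf{Top}$-groupoid $\mathscr F(\Gamma)$ is the $\mathbf{Top}$-groupoid with objects $\Gamma_0$ and a $\mathbf{Top}$-graph morphism $\sigma:\Gamma\to\mathscr F(\Gamma)$ such that every $\mathbf{Top}$-graph morphism from $\Gamma$ into a $\mathbf{Top}$-groupoid extends uniquely to a functor $\mathscr F(\Gamma)\to\mathcal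 G$ continuous on hom-spaces. The free Graev topological group $F_G(X,\ast)$ is the topological group with continuous $\sigma_\ast:X\to F_G(X,\ast)$, $\sigma_\ast(\ast)=e$, universal for continuous based maps into topological groups. *)

theory Defs
  imports "HOL-Analysis.Analysis" "HOL-Algebra.Group"
begin

definition quotient_topology :: "'a topology \<Rightarrow> ('a \<Rightarrow> 'b) \<Rightarrow> 'b topology" where
  "quotient_topology X f =
     topology (\<lambda>U. U \<subseteq> f ` topspace X \<and> openin X {x \<in> topspace X. f x \<in> U})"

definition sum2_topology :: "'a topology \<Rightarrow> 'b topology \<Rightarrow> ('a + 'b) topology" where
  "sum2_topology X Y =
     topology (\<lambda>U. U \<subseteq> Inl ` topspace X \<union> Inr ` topspace Y
                  \<and> openin X (Inl -` U) \<and> openin Y (Inr -` U))"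

definition topgraph :: "'v set \<Rightarrow> 'e topology \<Rightarrow> ('e \<Rightarrow> 'v) \<Rightarrow> ('e \<Rightarrow> 'v) \<Rightarrow> bool" where
  "topgraph V E d0 d1 \<longleftrightarrow>
     continuous_map E (discrete_topology V) d0 \<and> continuous_map E (discrete_topology V) d1"

definition edges_between :: "'e topology \<Rightarrow> ('e \<Rightarrow> 'v) \<Rightarrow> ('e \<Rightarrow> 'v) \<Rightarrow> 'v \<Rightarrow> 'v \<Rightarrow> 'e set" where
  "edges_between E d0 d1 x y = {\<alpha> \<in> topspace E. d0 \<alpha> = x \<and> d1 \<alpha> = y}"

text \<open>Realization: V + E x [0,1] modulo (alpha,i) ~ d_i alpha.  The map below sends each
  point to a canonical representative of its class.\<close>
definition realization_map :: "('e \<Rightarrow> 'v) \<Rightarrow> ('e \<Rightarrow> 'v) \<Rightarrow> 'v + 'e \<times> real \<Rightarrow> 'v + 'e \<times> real" where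
  "realization_map d0 d1 p =
     (case p of Inl x \<Rightarrow> Inl x
      | Inr (\<alpha>, t) \<Rightarrow> (if t = 0 then Inl (d0 \<alpha>) else if t = 1 then Inl (d1 \<alpha>) else Inr (\<alpha>, t)))"

definition realization :: "'v set \<Rightarrow> 'e topology \<Rightarrow> ('e \<Rightarrow> 'v) \<Rightarrow> ('e \<Rightarrow> 'v) \<Rightarrow> ('v + 'e \<times> real) topology" where
  "realization V E d0 d1 =
     quotient_topology (sum2_topology (discrete_topology V) (prod_topology E (top_of_set {0..1})))
                       (realization_map d0 d1)"

definition connected_topgraph :: "'v set \<Rightarrow> 'e topology \<Rightarrow> ('e \<Rightarrow> 'v) \<Rightarrow> ('e \<Rightarrow> 'v) \<Rightarrow> bool" where
  "connected_topgraph V E d0 d1 \<longleftrightarrow> topgraph V E d0 d1 \<and> path_connected_space (realization V E d0 d1)"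

definition is_tree :: "'v set \<Rightarrow> 'e topology \<Rightarrow> ('e \<Rightarrow> 'v) \<Rightarrow> ('e \<Rightarrow> 'v) \<Rightarrow> bool" where
  "is_tree V E d0 d1 \<longleftrightarrow> topgraph V E d0 d1 \<and> E = discrete_topology (topspace E)
      \<and> contractible_space (realization V E d0 d1)"

definition maximal_tree :: "'v set \<Rightarrow> 'e topology \<Rightarrow> ('e \<Rightarrow> 'v) \<Rightarrow> ('e \<Rightarrow> 'v) \<Rightarrow> 'e set \<Rightarrow> bool" where
  "maximal_tree V E d0 d1 T \<longleftrightarrow> T \<subseteq> topspace E \<and> is_tree V (subtopology E T) d0 d1"

text \<open>The quotient Gamma/T: the edge set T is collapsed to the single point None (the basepoint).\<close>
definition collapse :: "'e set \<Rightarrow> 'e \<Rightarrow> 'e option" where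
  "collapse T \<alpha> = (if \<alpha> \<in> T then None else Some \<alpha>)"

definition graph_quotient :: "'e topology \<Rightarrow> 'e set \<Rightarrow> 'e option topology" where
  "graph_quotient E T = quotient_topology E (collapse T)"

text \<open>comp g f is "g after f": for f in hom x y and g in hom y z it lies in hom x z.\<close>
record ('o, 'm) tgpd =
  obj :: "'o set"
  Hom :: "'o \<Rightarrow> 'o \<Rightarrow> 'm set"
  comp :: "'m \<Rightarrow> 'm \<Rightarrow> 'm"
  ident :: "'o \<Rightarrow> 'm"
  ginv :: "'m \<Rightarrow> 'm"
  homtop :: "'o \<Rightarrow> 'o \<Rightarrow> 'm topology"

definition top_groupoid :: "('o, 'm) tgpd \<Rightarrow> bool" where
  "top_groupoid G \<longleftrightarrow>
    (\<forall>x\<in>obj G. ident G x \<in> Hom G x x) \<and>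
    (\<forall>x\<in>obj G. \<forall>y\<in>obj G. \<forall>z\<in>obj G. \<forall>f\<in>Hom G x y. \<forall>g\<in>Hom G y z. comp G g f \<in> Hom G x z) \<and>
    (\<forall>w\<in>obj G. \<forall>x\<in>obj G. \<forall>y\<in>obj G. \<forall>z\<in>obj G. \<forall>f\<in>Hom G w x. \<forall>g\<in>Hom G x y. \<forall>h\<in>Hom G y z.
        comp G h (comp G g f) = comp G (comp G h g) f) \<and>
    (\<forall>x\<in>obj G. \<forall>y\<in>obj G. \<forall>f\<in>Hom G x y. comp G f (ident G x) = f \<and> comp G (ident G y) f = f) \<and>
    (\<forall>x\<in>obj G. \<forall>y\<in>obj G. \<forall>f\<in>Hom G x y.
        ginv G f \<in> Hom G y x \<and> comp G (ginv G f) f = ident G x \<and> comp G f (ginv G f) = ident G y) \<and>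
    (\<forall>x\<in>obj G. \<forall>y\<in>obj G. \<forall>x'\<in>obj G. \<forall>y'\<in>obj G.
        Hom G x y \<inter> Hom G x' y' \<noteq> {} \<longrightarrow> x = x' \<and> y = y') \<and>
    (\<forall>x\<in>obj G. \<forall>y\<in>obj G. topspace (homtop G x y) = Hom G x y) \<and>
    (\<forall>x\<in>obj G. \<forall>y\<in>obj G. \<forall>z\<in>obj G.
        continuous_map (prod_topology (homtop G x y) (homtop G y z)) (homtop G x z)
                       (\<lambda>(f, g). comp G g f)) \<and>
    (\<forall>x\<in>obj G. \<forall>y\<in>obj G. continuous_map (homtop G x y) (homtop G y x) (ginv G))"

definition graph_morphism ::
  "'v set \<Rightarrow> 'e topology \<Rightarrow> ('e \<Rightarrow> 'v) \<Rightarrow> ('e \<Rightarrow> 'v) \<Rightarrow> ('o, 'm, 'z) tgpd_scheme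
     \<Rightarrow> ('v \<Rightarrow> 'o) \<Rightarrow> ('e \<Rightarrow> 'm) \<Rightarrow> bool" where
  "graph_morphism V E d0 d1 G f0 f \<longleftrightarrow>
     f0 ` V \<subseteq> obj G \<and>
     (\<forall>x\<in>V. \<forall>y\<in>V. continuous_map (subtopology E (edges_between E d0 d1 x y))
                                     (homtop G (f0 x) (f0 y)) f)"

definition cont_functor ::
  "('o, 'm, 'z) tgpd_scheme \<Rightarrow> ('p, 'n, 'y) tgpd_scheme \<Rightarrow> ('o \<Rightarrow> 'p) \<Rightarrow> ('m \<Rightarrow> 'n) \<Rightarrow> bool" where
  "cont_functor G H F0 F \<longleftrightarrow>
     F0 ` obj G \<subseteq> obj H \<and>
     (\<forall>x\<in>obj G. \<forall>y\<in>obj G. continuous_map (homtop G x y) (homtop H (F0 x) (F0 y)) F) \<and>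
     (\<forall>x\<in>obj G. F (ident G x) = ident H (F0 x)) \<and>
     (\<forall>x\<in>obj G. \<forall>y\<in>obj G. \<forall>z\<in>obj G. \<forall>f\<in>Hom G x y. \<forall>g\<in>Hom G y z.
         F (comp G g f) = comp H (F g) (F f))"

text \<open>Free Top-groupoid on Gamma (objects V, generating morphism sigma), universal with respect
  to all Top-groupoids whose objects have type 'w and morphisms type 'n.\<close>
definition free_top_groupoid ::
  "'v set \<Rightarrow> 'e topology \<Rightarrow> ('e \<Rightarrow> 'v) \<Rightarrow> ('e \<Rightarrow> 'v) \<Rightarrow> ('v, 'm) tgpd \<Rightarrow> ('e \<Rightarrow> 'm)
     \<Rightarrow> 'w itself \<Rightarrow> 'n itself \<Rightarrow> bool" where
  "free_top_groupoid V E d0 d1 G \<sigma> _ _ \<longleftrightarrow>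
     top_groupoid G \<and> obj G = V \<and> graph_morphism V E d0 d1 G id \<sigma> \<and>
     (\<forall>(H :: ('w, 'n) tgpd) f0 f. top_groupoid H \<and> graph_morphism V E d0 d1 H f0 f \<longrightarrow>
        (\<exists>F. cont_functor G H f0 F \<and> (\<forall>\<alpha>\<in>topspace E. F (\<sigma> \<alpha>) = f \<alpha>)) \<and>
        (\<forall>F F'. cont_functor G H f0 F \<and> (\<forall>\<alpha>\<in>topspace E. F (\<sigma> \<alpha>) = f \<alpha>) \<and>
                cont_functor G H f0 F' \<and> (\<forall>\<alpha>\<in>topspace E. F' (\<sigma> \<alpha>) = f \<alpha>) \<longrightarrow>
                (\<forall>x\<in>V. \<forall>y\<in>V. \<forall>g\<in>Hom G x y. F g = F' g)))"

definition vertex_group :: "('o, 'm) tgpd \<Rightarrow> 'o \<Rightarrow> 'm monoid" where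
  "vertex_group G v = \<lparr>carrier = Hom G v v, mult = (\<lambda>a b. comp G a b), one = ident G v\<rparr>"

definition topological_group :: "('a, 'z) monoid_scheme \<Rightarrow> 'a topology \<Rightarrow> bool" where
  "topological_group G \<tau> \<longleftrightarrow>
     group G \<and> topspace \<tau> = carrier G \<and>
     continuous_map (prod_topology \<tau> \<tau>) \<tau> (\<lambda>(x, y). x \<otimes>\<^bsub>G\<^esub> y) \<and>
     continuous_map \<tau> \<tau> (\<lambda>x. inv\<^bsub>G\<^esub> x)"

definition top_group_isomorphic ::
  "('a, 'z) monoid_scheme \<Rightarrow> 'a topology \<Rightarrow> ('b, 'y) monoid_scheme \<Rightarrow> 'b topology \<Rightarrow> bool" where
  "top_group_isomorphic G \<tau> H \<tau>' \<longleftrightarrow> (\<exists>\<phi>. \<phi> \<in> iso G H \<and> homeomorphic_map \<tau> \<tau>' \<phi>)"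

text \<open>Free Graev topological group on the based space (X, b), universal with respect to all
  topological groups with elements of type 'h.\<close>
definition graev_free_group ::
  "'x topology \<Rightarrow> 'x \<Rightarrow> 'a monoid \<Rightarrow> 'a topology \<Rightarrow> ('x \<Rightarrow> 'a) \<Rightarrow> 'h itself \<Rightarrow> bool" where
  "graev_free_group X b F \<tau> \<sigma> _ \<longleftrightarrow>
     b \<in> topspace X \<and> topological_group F \<tau> \<and> continuous_map X \<tau> \<sigma> \<and> \<sigma> b = \<one>\<^bsub>F\<^esub> \<and>
     (\<forall>(H :: 'h monoid) \<tau>H f. topological_group H \<tau>H \<and> continuous_map X \<tau>H f \<and> f b = \<one>\<^bsub>H\<^esub> \<longrightarrow>
        (\<exists>\<phi>. \<phi> \<in> hom F H \<and> continuous_map \<tau> \<tau>H \<phi> \<and> (\<forall>x\<in>topspace X. \<phi> (\<sigma> x) = f x)) \<and>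
        (\<forall>\<phi> \<psi>. \<phi> \<in> hom F H \<and> continuous_map \<tau> \<tau>H \<phi> \<and> (\<forall>x\<in>topspace X. \<phi> (\<sigma> x) = f x) \<and>
                \<psi> \<in> hom F H \<and> continuous_map \<tau> \<tau>H \<psi> \<and> (\<forall>x\<in>topspace X. \<psi> (\<sigma> x) = f x) \<longrightarrow>
                (\<forall>g\<in>carrier F. \<phi> g = \<psi> g)))"

end

(*
  Choose in the maximal tree T a path t x from v to every vertex x.  Labelling each edge by its class in
  \<Gamma>/T is a continuous graph morphism into the codiscrete groupoid V \<times> F\<^sub>G(\<Gamma>/T) \<times> V; the induced functor
  on the free Top-groupoid restricts to a continuous homomorphism from the vertex group at v to F\<^sub>G(\<Gamma>/T).
  In the other direction the loops (t (d1 \<alpha>))\<inverse> \<sigma>(\<alpha>) (t (d0 \<alpha>)) are trivial on T, so they factor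
  through \<Gamma>/T and induce a continuous homomorphism back.  Both composites fix the generators, so the
  uniqueness halves of the two universal properties make them identities.

  The tree enters only through the existence and uniqueness of the paths t x.  Uniqueness needs that
  T has no cycles, which follows from contractibility of |T|: winding a single edge e once around the
  circle gives a map |T| \<rightarrow> \<complex> - {0} whose logarithm along the contraction is a potential for
  the indicator of e, so a closed walk in T that crosses e must cross it back.
*)

theory Submission
  imports Defs
begin

section \<open>Quotient and binary sum topologies\<close>

lemma istopology_quotient_topology:
  "istopology (\<lambda>U. U \<subseteq> f ` topspace X \<and> openin X {x \<in> topspace X. f x \<in> U})"
proof -
  have "{x \<in> topspace X. f x \<in> S \<and> f x \<in> U} = {x \<in> topspace X. f x \<in> S} \<inter> {x \<in> topspace X. f x \<in> U}"
    for S U by auto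
  moreover have "{x \<in> topspace X. \<exists>U\<in>K. f x \<in> U} = (\<Union>U\<in>K. {x \<in> topspace X. f x \<in> U})" for K
    by auto
  ultimately show ?thesis
    unfolding istopology_def by (auto intro!: openin_Union openin_Int)
qed

lemma openin_quotient_topology:
  "openin (quotient_topology X f) U \<longleftrightarrow> U \<subseteq> f ` topspace X \<and> openin X {x \<in> topspace X. f x \<in> U}"
  unfolding quotient_topology_def by (simp add: topology_inverse'[OF istopology_quotient_topology])

lemma topspace_quotient_topology [simp]: "topspace (quotient_topology X f) = f ` topspace X"
proof -
  have "{x \<in> topspace X. f x \<in> f ` topspace X} = topspace X" by auto
  then have "openin (quotient_topology X f) (f ` topspace X)"
    by (simp add: openin_quotient_topology)
  then show ?thesis
    unfolding topspace_def[of "quotient_topology X f"] by (auto simp: openin_quotient_topology)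
qed

lemma continuous_map_quotient_topology: "continuous_map X (quotient_topology X f) f"
  unfolding continuous_map_def by (auto simp: openin_quotient_topology)

lemma continuous_map_from_quotient_topology:
  assumes "continuous_map X Y (g \<circ> f)"
  shows "continuous_map (quotient_topology X f) Y g"
  unfolding continuous_map_def
proof (intro conjI allI impI)
  show "g \<in> topspace (quotient_topology X f) \<rightarrow> topspace Y"
    using assms by (auto simp: continuous_map_def)
  fix U assume "openin Y U"
  moreover have "{x \<in> topspace X. f x \<in> {y \<in> topspace (quotient_topology X f). g y \<in> U}}
      = {x \<in> topspace X. (g \<circ> f) x \<in> U}"
    by auto
  ultimately show "openin (quotient_topology X f) {y \<in> topspace (quotient_topology X f). g y \<in> U}"
    using assms by (auto simp: openin_quotient_topology continuous_map_def)
qed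

lemma istopology_sum2_topology:
  "istopology (\<lambda>U. U \<subseteq> Inl ` topspace X \<union> Inr ` topspace Y \<and> openin X (Inl -` U) \<and> openin Y (Inr -` U))"
  unfolding istopology_def by (auto simp: vimage_Union vimage_Int intro!: openin_Union openin_Int)

lemma openin_sum2_topology:
  "openin (sum2_topology X Y) U \<longleftrightarrow>
     U \<subseteq> Inl ` topspace X \<union> Inr ` topspace Y \<and> openin X (Inl -` U) \<and> openin Y (Inr -` U)"
  unfolding sum2_topology_def by (simp add: topology_inverse'[OF istopology_sum2_topology])

lemma topspace_sum2_topology [simp]:
  "topspace (sum2_topology X Y) = Inl ` topspace X \<union> Inr ` topspace Y"
proof -
  have "Inl -` (Inl ` topspace X \<union> Inr ` topspace Y) = topspace X"
    and "Inr -` (Inl ` topspace X \<union> Inr ` topspace Y) = topspace Y" by auto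
  then have "openin (sum2_topology X Y) (Inl ` topspace X \<union> Inr ` topspace Y)"
    by (simp add: openin_sum2_topology)
  then have "Inl ` topspace X \<union> Inr ` topspace Y \<subseteq> topspace (sum2_topology X Y)"
    by (rule openin_subset)
  moreover have "topspace (sum2_topology X Y) \<subseteq> Inl ` topspace X \<union> Inr ` topspace Y"
    unfolding topspace_def[of "sum2_topology X Y"] by (auto simp: openin_sum2_topology)
  ultimately show ?thesis by blast
qed

lemma continuous_map_Inr_sum2_topology: "continuous_map Y (sum2_topology X Y) Inr"
  unfolding continuous_map_def
proof (intro conjI allI impI)
  fix U assume U: "openin (sum2_topology X Y) U"
  then have "{y \<in> topspace Y. Inr y \<in> U} = Inr -` U"
    by (auto simp: openin_sum2_topology)
  with U show "openin Y {y \<in> topspace Y. Inr y \<in> U}"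
    by (simp add: openin_sum2_topology)
qed auto

lemma continuous_map_from_sum2_topology:
  assumes "continuous_map X Z (h \<circ> Inl)" and "continuous_map Y Z (h \<circ> Inr)"
  shows "continuous_map (sum2_topology X Y) Z h"
  unfolding continuous_map_def
proof (intro conjI allI impI)
  show "h \<in> topspace (sum2_topology X Y) \<rightarrow> topspace Z"
    using assms by (auto simp: continuous_map_def)
  fix U assume "openin Z U"
  moreover have "Inl -` {p \<in> topspace (sum2_topology X Y). h p \<in> U} = {x \<in> topspace X. (h \<circ> Inl) x \<in> U}"
    and "Inr -` {p \<in> topspace (sum2_topology X Y). h p \<in> U} = {y \<in> topspace Y. (h \<circ> Inr) y \<in> U}"
    by auto
  ultimately show "openin (sum2_topology X Y) {p \<in> topspace (sum2_topology X Y). h p \<in> U}"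
    using assms by (auto simp: openin_sum2_topology continuous_map_def)
qed

section \<open>Topological groupoids\<close>

locale topological_groupoid =
  fixes G :: "('o, 'm) tgpd"
  assumes top_groupoid: "top_groupoid G"
begin

lemmas top_groupoid_unfolded = top_groupoid[unfolded top_groupoid_def]

lemma ident_closed: "x \<in> obj G \<Longrightarrow> ident G x \<in> Hom G x x"
  using top_groupoid_unfolded[THEN conjunct1] by blast

lemma comp_closed:
  "\<lbrakk>x \<in> obj G; y \<in> obj G; z \<in> obj G; f \<in> Hom G x y; g \<in> Hom G y z\<rbrakk> \<Longrightarrow> comp G g f \<in> Hom G x z"
  using top_groupoid_unfolded[THEN conjunct2, THEN conjunct1] by blast

lemma comp_assoc:
  "\<lbrakk>w \<in> obj G; x \<in> obj G; y \<in> obj G; z \<in> obj G; f \<in> Hom G w x; g \<in> Hom G x y; h \<in> Hom G y z\<rbrakk>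
   \<Longrightarrow> comp G h (comp G g f) = comp G (comp G h g) f"
  using top_groupoid_unfolded[THEN conjunct2, THEN conjunct2, THEN conjunct1] by blast

lemma comp_ident_right: "\<lbrakk>x \<in> obj G; y \<in> obj G; f \<in> Hom G x y\<rbrakk> \<Longrightarrow> comp G f (ident G x) = f"
  using top_groupoid_unfolded[THEN conjunct2, THEN conjunct2, THEN conjunct2, THEN conjunct1] by blast

lemma comp_ident_left: "\<lbrakk>x \<in> obj G; y \<in> obj G; f \<in> Hom G x y\<rbrakk> \<Longrightarrow> comp G (ident G y) f = f"
  using top_groupoid_unfolded[THEN conjunct2, THEN conjunct2, THEN conjunct2, THEN conjunct1] by blast

lemma ginv_closed: "\<lbrakk>x \<in> obj G; y \<in> obj G; f \<in> Hom G x y\<rbrakk> \<Longrightarrow> ginv G f \<in> Hom G y x"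
  using top_groupoid_unfolded[THEN conjunct2, THEN conjunct2, THEN conjunct2, THEN conjunct2, THEN conjunct1] by blast

lemma comp_ginv_left: "\<lbrakk>x \<in> obj G; y \<in> obj G; f \<in> Hom G x y\<rbrakk> \<Longrightarrow> comp G (ginv G f) f = ident G x"
  using top_groupoid_unfolded[THEN conjunct2, THEN conjunct2, THEN conjunct2, THEN conjunct2, THEN conjunct1] by blast

lemma comp_ginv_right: "\<lbrakk>x \<in> obj G; y \<in> obj G; f \<in> Hom G x y\<rbrakk> \<Longrightarrow> comp G f (ginv G f) = ident G y"
  using top_groupoid_unfolded[THEN conjunct2, THEN conjunct2, THEN conjunct2, THEN conjunct2, THEN conjunct1] by blast

lemma topspace_homtop: "\<lbrakk>x \<in> obj G; y \<in> obj G\<rbrakk> \<Longrightarrow> topspace (homtop G x y) = Hom G x y"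
  using top_groupoid_unfolded[THEN conjunct2, THEN conjunct2, THEN conjunct2, THEN conjunct2, THEN conjunct2, THEN conjunct2, THEN conjunct1] by blast

lemma continuous_map_ginv:
  "\<lbrakk>x \<in> obj G; y \<in> obj G\<rbrakk> \<Longrightarrow> continuous_map (homtop G x y) (homtop G y x) (ginv G)"
  using top_groupoid_unfolded[THEN conjunct2, THEN conjunct2, THEN conjunct2, THEN conjunct2, THEN conjunct2, THEN conjunct2, THEN conjunct2, THEN conjunct2] by blast

lemma continuous_map_comp:
  assumes "x \<in> obj G" "y \<in> obj G" "z \<in> obj G"
    and "continuous_map Z (homtop G x y) f" "continuous_map Z (homtop G y z) g"
  shows "continuous_map Z (homtop G x z) (\<lambda>t. comp G (g t) (f t))"
proof -
  have comp: "continuous_map (prod_topology (homtop G x y) (homtop G y z)) (homtop G x z)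
                (\<lambda>(f, g). comp G g f)"
    using top_groupoid_unfolded[THEN conjunct2, THEN conjunct2, THEN conjunct2, THEN conjunct2,
        THEN conjunct2, THEN conjunct2, THEN conjunct2, THEN conjunct1] assms(1-3) by blast
  have "continuous_map Z (prod_topology (homtop G x y) (homtop G y z)) (\<lambda>t. (f t, g t))"
    using assms(4,5) by (simp add: continuous_map_paired)
  from continuous_map_compose[OF this comp] show ?thesis
    by (simp add: o_def)
qed

lemma ginv_unique:
  assumes "x \<in> obj G" "y \<in> obj G" "f \<in> Hom G x y" "g \<in> Hom G y x" "comp G g f = ident G x"
  shows "g = ginv G f"
proof -
  have "g = comp G g (comp G f (ginv G f))"
    using assms by (simp add: comp_ginv_right comp_ident_right)
  also have "\<dots> = comp G (comp G g f) (ginv G f)"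
    using assms by (simp add: comp_assoc ginv_closed)
  also have "\<dots> = ginv G f"
    using assms by (simp add: comp_ident_left ginv_closed)
  finally show ?thesis .
qed

lemma ginv_ginv: "\<lbrakk>x \<in> obj G; y \<in> obj G; f \<in> Hom G x y\<rbrakk> \<Longrightarrow> ginv G (ginv G f) = f"
  by (metis ginv_closed comp_ginv_right ginv_unique)

lemma ginv_ident: "x \<in> obj G \<Longrightarrow> ginv G (ident G x) = ident G x"
  by (metis ident_closed ginv_unique comp_ident_left)

lemma ginv_comp:
  assumes "x \<in> obj G" "y \<in> obj G" "z \<in> obj G" "f \<in> Hom G x y" "g \<in> Hom G y z"
  shows "ginv G (comp G g f) = comp G (ginv G f) (ginv G g)"
proof -
  have "comp G (comp G (ginv G f) (ginv G g)) (comp G g f)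
      = comp G (ginv G f) (comp G (ginv G g) (comp G g f))"
    using assms by (simp add: comp_assoc ginv_closed comp_closed)
  also have "comp G (ginv G g) (comp G g f) = f"
    using assms by (simp add: comp_assoc ginv_closed comp_ginv_left comp_ident_left)
  finally have "comp G (comp G (ginv G f) (ginv G g)) (comp G g f) = ident G x"
    using assms by (simp add: comp_ginv_left)
  with assms show ?thesis
    using ginv_unique[OF assms(1,3) comp_closed[OF assms]
        comp_closed[OF assms(3,2,1) ginv_closed[OF assms(2,3,5)] ginv_closed[OF assms(1,2,4)]]]
    by simp
qed

lemma cancel_ginv_left:
  assumes "x \<in> obj G" "y \<in> obj G" "z \<in> obj G" "f \<in> Hom G x y" "g \<in> Hom G y z"
  shows "comp G (ginv G g) (comp G g f) = f"
proof -
  have "comp G (ginv G g) (comp G g f) = comp G (comp G (ginv G g) g) f"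
    using comp_assoc[OF assms(1-3) assms(2) assms(4,5) ginv_closed[OF assms(2,3,5)]] .
  then show ?thesis
    using assms by (simp add: comp_ginv_left comp_ident_left)
qed

lemma cancel_ginv_right:
  assumes "x \<in> obj G" "y \<in> obj G" "z \<in> obj G" "f \<in> Hom G x y" "g \<in> Hom G y z"
  shows "comp G (comp G g f) (ginv G f) = g"
proof -
  have "comp G (comp G g f) (ginv G f) = comp G g (comp G f (ginv G f))"
    using comp_assoc[OF assms(2,1,2,3) ginv_closed[OF assms(1,2,4)] assms(4,5)] by simp
  then show ?thesis
    using assms by (simp add: comp_ginv_right comp_ident_right)
qed

lemma group_vertex_group:
  assumes "v \<in> obj G"
  shows "group (vertex_group G v)"
proof (rule groupI)
  show "f \<otimes>\<^bsub>vertex_group G v\<^esub> g \<in> carrier (vertex_group G v)"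
    if "f \<in> carrier (vertex_group G v)" "g \<in> carrier (vertex_group G v)" for f g
    using assms that by (simp add: vertex_group_def comp_closed)
  show "\<one>\<^bsub>vertex_group G v\<^esub> \<in> carrier (vertex_group G v)"
    using assms by (simp add: vertex_group_def ident_closed)
  show "f \<otimes>\<^bsub>vertex_group G v\<^esub> g \<otimes>\<^bsub>vertex_group G v\<^esub> h
      = f \<otimes>\<^bsub>vertex_group G v\<^esub> (g \<otimes>\<^bsub>vertex_group G v\<^esub> h)"
    if "f \<in> carrier (vertex_group G v)" "g \<in> carrier (vertex_group G v)"
      "h \<in> carrier (vertex_group G v)" for f g h
    using assms that by (simp add: vertex_group_def comp_assoc)
  show "\<one>\<^bsub>vertex_group G v\<^esub> \<otimes>\<^bsub>vertex_group G v\<^esub> f = f"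
    if "f \<in> carrier (vertex_group G v)" for f
    using assms that by (simp add: vertex_group_def comp_ident_left)
  show "\<exists>f'\<in>carrier (vertex_group G v). f' \<otimes>\<^bsub>vertex_group G v\<^esub> f = \<one>\<^bsub>vertex_group G v\<^esub>"
    if "f \<in> carrier (vertex_group G v)" for f
    using assms that by (auto simp: vertex_group_def intro!: bexI[of _ "ginv G f"] comp_ginv_left ginv_closed)
qed

lemma inv_vertex_group:
  assumes "v \<in> obj G" "f \<in> Hom G v v"
  shows "inv\<^bsub>vertex_group G v\<^esub> f = ginv G f"
proof -
  interpret group "vertex_group G v" using assms(1) by (rule group_vertex_group)
  show ?thesis
    using assms by (intro inv_equality) (auto simp: vertex_group_def comp_ginv_left ginv_closed)
qed

lemma topological_group_vertex_group:
  assumes "v \<in> obj G"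
  shows "topological_group (vertex_group G v) (homtop G v v)"
  unfolding topological_group_def
proof (intro conjI)
  show "group (vertex_group G v)"
    using assms by (rule group_vertex_group)
  show "topspace (homtop G v v) = carrier (vertex_group G v)"
    using assms by (simp add: topspace_homtop vertex_group_def)
  have "continuous_map (prod_topology (homtop G v v) (homtop G v v)) (homtop G v v)
          (\<lambda>p. comp G (fst p) (snd p))"
    by (rule continuous_map_comp[OF assms assms assms]) (simp_all add: continuous_map_fst continuous_map_snd)
  then show "continuous_map (prod_topology (homtop G v v) (homtop G v v)) (homtop G v v)
      (\<lambda>(f, g). f \<otimes>\<^bsub>vertex_group G v\<^esub> g)"
    by (simp add: vertex_group_def case_prod_beta')
  show "continuous_map (homtop G v v) (homtop G v v) (\<lambda>f. inv\<^bsub>vertex_group G v\<^esub> f)"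
    using continuous_map_ginv[OF assms assms]
    by (rule continuous_map_eq) (simp add: topspace_homtop assms inv_vertex_group)
qed

end

lemma top_group_isomorphic_inverse:
  assumes "topspace \<tau> = carrier G" "topspace \<tau>' = carrier H"
    and "\<phi> \<in> hom G H" "continuous_map \<tau> \<tau>' \<phi>" "continuous_map \<tau>' \<tau> \<psi>"
    and "\<And>g. g \<in> carrier G \<Longrightarrow> \<psi> (\<phi> g) = g" "\<And>h. h \<in> carrier H \<Longrightarrow> \<phi> (\<psi> h) = h"
  shows "top_group_isomorphic G \<tau> H \<tau>'"
proof -
  have "bij_betw \<phi> (carrier G) (carrier H)"
    using assms continuous_map_image_subset_topspace[OF assms(5)] hom_in_carrier[OF assms(3)]
    by (intro bij_betw_byWitness[where f' = \<psi>]) auto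
  moreover have "homeomorphic_map \<tau> \<tau>' \<phi>"
    unfolding homeomorphic_map_maps homeomorphic_maps_def using assms(1,2,4-7) by auto
  ultimately show ?thesis
    using assms(3) unfolding top_group_isomorphic_def iso_def by blast
qed

section \<open>The codiscrete groupoid labelled by a topological group\<close>

text \<open>Morphisms \<open>x \<rightarrow> y\<close> are triples \<open>(x, a, y)\<close> with \<open>a \<in> carrier F\<close>, composed by multiplying the labels;
  continuous functors into this groupoid are continuous multiplicative labellings by \<open>F\<close>.\<close>

definition codiscrete_groupoid :: "'v set \<Rightarrow> 'f monoid \<Rightarrow> 'f topology \<Rightarrow> ('v, 'v \<times> 'f \<times> 'v) tgpd" where
  "codiscrete_groupoid V F \<tau> =
    \<lparr>obj = V, Hom = (\<lambda>x y. {x} \<times> carrier F \<times> {y}),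
     comp = (\<lambda>g f. (fst f, fst (snd g) \<otimes>\<^bsub>F\<^esub> fst (snd f), snd (snd g))),
     ident = (\<lambda>x. (x, \<one>\<^bsub>F\<^esub>, x)),
     ginv = (\<lambda>f. (snd (snd f), inv\<^bsub>F\<^esub> fst (snd f), fst f)),
     homtop = (\<lambda>x y. prod_topology (discrete_topology {x}) (prod_topology \<tau> (discrete_topology {y})))\<rparr>"

lemma codiscrete_groupoid_simps [simp]:
  "obj (codiscrete_groupoid V F \<tau>) = V"
  "Hom (codiscrete_groupoid V F \<tau>) x y = {x} \<times> carrier F \<times> {y}"
  "comp (codiscrete_groupoid V F \<tau>) g f = (fst f, fst (snd g) \<otimes>\<^bsub>F\<^esub> fst (snd f), snd (snd g))"
  "ident (codiscrete_groupoid V F \<tau>) x = (x, \<one>\<^bsub>F\<^esub>, x)"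
  "ginv (codiscrete_groupoid V F \<tau>) f = (snd (snd f), inv\<^bsub>F\<^esub> fst (snd f), fst f)"
  "homtop (codiscrete_groupoid V F \<tau>) x y
     = prod_topology (discrete_topology {x}) (prod_topology \<tau> (discrete_topology {y}))"
  by (simp_all add: codiscrete_groupoid_def)

lemma continuous_map_discrete_singleton:
  "continuous_map Z (discrete_topology {x}) f \<longleftrightarrow> (\<forall>z\<in>topspace Z. f z = x)"
proof
  assume "continuous_map Z (discrete_topology {x}) f"
  then show "\<forall>z\<in>topspace Z. f z = x"
    using continuous_map_image_subset_topspace by fastforce
next
  assume f: "\<forall>z\<in>topspace Z. f z = x"
  have "continuous_map Z (discrete_topology {x}) (\<lambda>_. x)"
    by simp
  then show "continuous_map Z (discrete_topology {x}) f"
    by (rule continuous_map_eq) (use f in simp)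
qed

lemma continuous_map_codiscrete_groupoid:
  "continuous_map Z (homtop (codiscrete_groupoid V F \<tau>) x y) f \<longleftrightarrow>
     continuous_map Z \<tau> (\<lambda>z. fst (snd (f z))) \<and> (\<forall>z\<in>topspace Z. fst (f z) = x \<and> snd (snd (f z)) = y)"
proof -
  have "continuous_map Z (homtop (codiscrete_groupoid V F \<tau>) x y) f \<longleftrightarrow>
          continuous_map Z (discrete_topology {x}) (fst \<circ> f) \<and> continuous_map Z \<tau> (fst \<circ> (snd \<circ> f))
          \<and> continuous_map Z (discrete_topology {y}) (snd \<circ> (snd \<circ> f))"
    by (simp only: codiscrete_groupoid_simps continuous_map_pairwise[of Z _ _ f]
        continuous_map_pairwise[of Z _ _ "snd \<circ> f"])
  then show ?thesis
    by (simp add: continuous_map_discrete_singleton o_def) blast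
qed

lemma continuous_map_codiscrete_label:
  "continuous_map (homtop (codiscrete_groupoid V F \<tau>) x y) \<tau> (\<lambda>a. fst (snd a))"
  using continuous_map_codiscrete_groupoid[of "homtop (codiscrete_groupoid V F \<tau>) x y" V F \<tau> x y id] by simp

lemma continuous_map_codiscrete_comp:
  assumes "topological_group F \<tau>"
  shows "continuous_map (prod_topology (homtop (codiscrete_groupoid V F \<tau>) x y) (homtop (codiscrete_groupoid V F \<tau>) y z))
           (homtop (codiscrete_groupoid V F \<tau>) x z) (\<lambda>(f, g). comp (codiscrete_groupoid V F \<tau>) g f)"
proof -
  let ?H = "codiscrete_groupoid V F \<tau>"
  have "continuous_map (prod_topology (homtop ?H x y) (homtop ?H y z)) \<tau> (\<lambda>p. fst (snd (fst p)))"
    and "continuous_map (prod_topology (homtop ?H x y) (homtop ?H y z)) \<tau> (\<lambda>p. fst (snd (snd p)))"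
    using continuous_map_compose[OF continuous_map_fst continuous_map_codiscrete_label]
      continuous_map_compose[OF continuous_map_snd continuous_map_codiscrete_label]
    by (simp_all add: o_def)
  then have "continuous_map (prod_topology (homtop ?H x y) (homtop ?H y z)) (prod_topology \<tau> \<tau>)
               (\<lambda>p. (fst (snd (snd p)), fst (snd (fst p))))"
    by (simp add: continuous_map_paired)
  moreover have "continuous_map (prod_topology \<tau> \<tau>) \<tau> (\<lambda>(a, b). a \<otimes>\<^bsub>F\<^esub> b)"
    using assms by (simp add: topological_group_def)
  ultimately have "continuous_map (prod_topology (homtop ?H x y) (homtop ?H y z)) \<tau>
                     ((\<lambda>(a, b). a \<otimes>\<^bsub>F\<^esub> b) \<circ> (\<lambda>p. (fst (snd (snd p)), fst (snd (fst p)))))"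
    by (rule continuous_map_compose)
  then show ?thesis
    unfolding continuous_map_codiscrete_groupoid by (auto simp: case_prod_beta o_def)
qed

lemma continuous_map_codiscrete_ginv:
  assumes "topological_group F \<tau>"
  shows "continuous_map (homtop (codiscrete_groupoid V F \<tau>) x y) (homtop (codiscrete_groupoid V F \<tau>) y x)
           (ginv (codiscrete_groupoid V F \<tau>))"
proof -
  have "continuous_map \<tau> \<tau> (\<lambda>a. inv\<^bsub>F\<^esub> a)"
    using assms by (simp add: topological_group_def)
  from continuous_map_compose[OF continuous_map_codiscrete_label this]
  have "continuous_map (homtop (codiscrete_groupoid V F \<tau>) x y) \<tau> (\<lambda>a. inv\<^bsub>F\<^esub> fst (snd a))"
    by (simp add: o_def)
  then show ?thesis
    unfolding continuous_map_codiscrete_groupoid by auto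
qed

lemma top_groupoid_codiscrete_groupoid:
  assumes "topological_group F \<tau>"
  shows "top_groupoid (codiscrete_groupoid V F \<tau>)"
proof -
  interpret group F
    using assms by (simp add: topological_group_def)
  let ?H = "codiscrete_groupoid V F \<tau>"
  have assoc: "comp ?H h (comp ?H g f) = comp ?H (comp ?H h g) f"
    if "f \<in> Hom ?H w x" "g \<in> Hom ?H x y" "h \<in> Hom ?H y z" for w x y z f g h
    using that by (auto simp: m_assoc)
  show ?thesis
    unfolding top_groupoid_def
  proof (intro conjI)
    show "\<forall>w\<in>obj ?H. \<forall>x\<in>obj ?H. \<forall>y\<in>obj ?H. \<forall>z\<in>obj ?H.
       \<forall>f\<in>Hom ?H w x. \<forall>g\<in>Hom ?H x y. \<forall>h\<in>Hom ?H y z.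
       comp ?H h (comp ?H g f) = comp ?H (comp ?H h g) f"
      using assoc by blast
    show "\<forall>x\<in>obj ?H. \<forall>y\<in>obj ?H. topspace (homtop ?H x y) = Hom ?H x y"
      using assms by (simp add: topological_group_def)
    show "\<forall>x\<in>obj ?H. \<forall>y\<in>obj ?H. \<forall>z\<in>obj ?H.
       continuous_map (prod_topology (homtop ?H x y) (homtop ?H y z)) (homtop ?H x z) (\<lambda>(f, g). comp ?H g f)"
      using continuous_map_codiscrete_comp[OF assms, where V = V] by blast
    show "\<forall>x\<in>obj ?H. \<forall>y\<in>obj ?H. continuous_map (homtop ?H x y) (homtop ?H y x) (ginv ?H)"
      using continuous_map_codiscrete_ginv[OF assms, where V = V] by blast
  qed auto
qed

lemma cont_functor_Hom:
  assumes "top_groupoid G" "top_groupoid H" "cont_functor G H F0 F"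
    and "x \<in> obj G" "y \<in> obj G" "g \<in> Hom G x y"
  shows "F g \<in> Hom H (F0 x) (F0 y)"
proof -
  interpret G: topological_groupoid G by unfold_locales (rule assms(1))
  interpret H: topological_groupoid H by unfold_locales (rule assms(2))
  have "F0 x \<in> obj H" "F0 y \<in> obj H"
    using assms(3-5) by (auto simp: cont_functor_def)
  moreover have "continuous_map (homtop G x y) (homtop H (F0 x) (F0 y)) F"
    using assms(3-5) by (simp add: cont_functor_def)
  then have "F g \<in> topspace (homtop H (F0 x) (F0 y))"
    using continuous_map_image_subset_topspace assms(4-6) G.topspace_homtop by blast
  ultimately show ?thesis
    by (simp add: H.topspace_homtop)
qed

lemma cont_functor_compose:
  assumes "top_groupoid G" "top_groupoid H"
    and F: "cont_functor G H F0 F" and F': "cont_functor H K F0' F'"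
  shows "cont_functor G K (F0' \<circ> F0) (F' \<circ> F)"
  unfolding cont_functor_def
proof (intro conjI ballI)
  have obj: "F0 x \<in> obj H" if "x \<in> obj G" for x
    using F that by (auto simp: cont_functor_def)
  show "(F0' \<circ> F0) ` obj G \<subseteq> obj K"
    using obj F' by (auto simp: cont_functor_def)
  show "continuous_map (homtop G x y) (homtop K ((F0' \<circ> F0) x) ((F0' \<circ> F0) y)) (F' \<circ> F)"
    if "x \<in> obj G" "y \<in> obj G" for x y
  proof -
    have "continuous_map (homtop G x y) (homtop H (F0 x) (F0 y)) F"
      and "continuous_map (homtop H (F0 x) (F0 y)) (homtop K (F0' (F0 x)) (F0' (F0 y))) F'"
      using F F' that obj by (simp_all add: cont_functor_def)
    then show ?thesis
      by (simp add: continuous_map_compose)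
  qed
  show "(F' \<circ> F) (ident G x) = ident K ((F0' \<circ> F0) x)" if "x \<in> obj G" for x
    using F F' that obj by (simp add: cont_functor_def)
  show "(F' \<circ> F) (comp G g f) = comp K ((F' \<circ> F) g) ((F' \<circ> F) f)"
    if "x \<in> obj G" "y \<in> obj G" "z \<in> obj G" "f \<in> Hom G x y" "g \<in> Hom G y z" for x y z f g
  proof -
    have "F (comp G g f) = comp H (F g) (F f)"
      using F that by (simp add: cont_functor_def)
    moreover have "F f \<in> Hom H (F0 x) (F0 y)" "F g \<in> Hom H (F0 y) (F0 z)"
      using cont_functor_Hom[OF assms(1,2) F] that by simp_all
    then have "F' (comp H (F g) (F f)) = comp K (F' (F g)) (F' (F f))"
      using F' obj[OF that(1)] obj[OF that(2)] obj[OF that(3)] unfolding cont_functor_def by blast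
    ultimately show ?thesis
      by simp
  qed
qed

locale functor_to_codiscrete = topological_groupoid G for G :: "('o, 'm) tgpd" +
  fixes V :: "'o set" and F :: "'f monoid" and \<tau> :: "'f topology" and \<Phi> :: "'m \<Rightarrow> 'o \<times> 'f \<times> 'o"
  assumes topological_group: "topological_group F \<tau>"
    and cont_functor: "cont_functor G (codiscrete_groupoid V F \<tau>) id \<Phi>"
begin

sublocale F: group F
  using topological_group by (simp add: topological_group_def)

definition label :: "'m \<Rightarrow> 'f" where
  "label g = fst (snd (\<Phi> g))"

lemma functor_eq:
  assumes "x \<in> obj G" "y \<in> obj G" "g \<in> Hom G x y"
  shows "\<Phi> g = (x, label g, y)" and label_closed: "label g \<in> carrier F"
  using cont_functor_Hom[OF top_groupoid top_groupoid_codiscrete_groupoid[OF topological_group]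
      cont_functor assms]
  by (auto simp: label_def)

lemma label_comp:
  assumes "x \<in> obj G" "y \<in> obj G" "z \<in> obj G" "f \<in> Hom G x y" "g \<in> Hom G y z"
  shows "label (comp G g f) = label g \<otimes>\<^bsub>F\<^esub> label f"
proof -
  have "\<Phi> (comp G g f) = comp (codiscrete_groupoid V F \<tau>) (\<Phi> g) (\<Phi> f)"
    using cont_functor assms unfolding cont_functor_def by blast
  then show ?thesis
    by (simp add: label_def)
qed

lemma label_ident: "x \<in> obj G \<Longrightarrow> label (ident G x) = \<one>\<^bsub>F\<^esub>"
  using cont_functor by (simp add: cont_functor_def label_def)

lemma label_ginv:
  assumes "x \<in> obj G" "y \<in> obj G" "g \<in> Hom G x y"
  shows "label (ginv G g) = inv\<^bsub>F\<^esub> label g"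
proof -
  have "label (ginv G g) \<otimes>\<^bsub>F\<^esub> label g = \<one>\<^bsub>F\<^esub>"
    using label_comp[OF assms(1,2,1) assms(3) ginv_closed[OF assms]] label_ident[OF assms(1)]
      comp_ginv_left[OF assms] by simp
  then show ?thesis
    using F.inv_equality label_closed assms ginv_closed by metis
qed

lemma continuous_map_label:
  assumes "x \<in> obj G" "y \<in> obj G"
  shows "continuous_map (homtop G x y) \<tau> label"
proof -
  have "continuous_map (homtop G x y) (homtop (codiscrete_groupoid V F \<tau>) x y) \<Phi>"
    using cont_functor assms by (simp add: cont_functor_def)
  then show ?thesis
    unfolding continuous_map_codiscrete_groupoid label_def by (simp add: o_def)
qed

lemma label_hom: "v \<in> obj G \<Longrightarrow> label \<in> hom (vertex_group G v) F"
  by (rule homI) (auto simp: vertex_group_def label_closed label_comp)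

end

section \<open>Walks and their values in a groupoid\<close>

text \<open>A step \<open>(\<alpha>, True)\<close> traverses the edge \<open>\<alpha>\<close> from \<open>d0 \<alpha>\<close> to \<open>d1 \<alpha>\<close>, a step \<open>(\<alpha>, False)\<close> backwards.\<close>

definition step_tail :: "('e \<Rightarrow> 'v) \<Rightarrow> ('e \<Rightarrow> 'v) \<Rightarrow> 'e \<times> bool \<Rightarrow> 'v" where
  "step_tail d0 d1 s = (if snd s then d0 (fst s) else d1 (fst s))"

definition step_head :: "('e \<Rightarrow> 'v) \<Rightarrow> ('e \<Rightarrow> 'v) \<Rightarrow> 'e \<times> bool \<Rightarrow> 'v" where
  "step_head d0 d1 s = (if snd s then d1 (fst s) else d0 (fst s))"

lemma step_tail_flip [simp]: "step_tail d0 d1 (\<alpha>, \<not> b) = step_head d0 d1 (\<alpha>, b)"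
  and step_head_flip [simp]: "step_head d0 d1 (\<alpha>, \<not> b) = step_tail d0 d1 (\<alpha>, b)"
  by (simp_all add: step_tail_def step_head_def)

fun walk :: "'e set \<Rightarrow> ('e \<Rightarrow> 'v) \<Rightarrow> ('e \<Rightarrow> 'v) \<Rightarrow> 'v \<Rightarrow> ('e \<times> bool) list \<Rightarrow> 'v \<Rightarrow> bool" where
  "walk T d0 d1 x [] y \<longleftrightarrow> x = y"
| "walk T d0 d1 x (s # w) y \<longleftrightarrow>
     fst s \<in> T \<and> step_tail d0 d1 s = x \<and> walk T d0 d1 (step_head d0 d1 s) w y"

definition reverse_walk :: "('e \<times> bool) list \<Rightarrow> ('e \<times> bool) list" where
  "reverse_walk w = rev (map (\<lambda>(\<alpha>, b). (\<alpha>, \<not> b)) w)"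

lemma reverse_walk_simps [simp]:
  "reverse_walk [] = []" "reverse_walk ((\<alpha>, b) # w) = reverse_walk w @ [(\<alpha>, \<not> b)]"
  by (simp_all add: reverse_walk_def)

lemma walk_append:
  "walk T d0 d1 x (u @ w) y \<longleftrightarrow> (\<exists>z. walk T d0 d1 x u z \<and> walk T d0 d1 z w y)"
  by (induction u arbitrary: x) auto

lemma walk_reverse: "walk T d0 d1 x w y \<Longrightarrow> walk T d0 d1 y (reverse_walk w) x"
proof (induction w arbitrary: x)
  case (Cons s w)
  then show ?case
    by (cases s) (auto simp: walk_append)
qed simp

definition step_value :: "('v, 'm) tgpd \<Rightarrow> ('e \<Rightarrow> 'm) \<Rightarrow> 'e \<times> bool \<Rightarrow> 'm" where
  "step_value G \<sigma> s = (if snd s then \<sigma> (fst s) else ginv G (\<sigma> (fst s)))"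

fun walk_value :: "('v, 'm) tgpd \<Rightarrow> ('e \<Rightarrow> 'm) \<Rightarrow> ('e \<Rightarrow> 'v) \<Rightarrow> ('e \<Rightarrow> 'v) \<Rightarrow> 'v
                     \<Rightarrow> ('e \<times> bool) list \<Rightarrow> 'm" where
  "walk_value G \<sigma> d0 d1 x [] = ident G x"
| "walk_value G \<sigma> d0 d1 x (s # w) = comp G (walk_value G \<sigma> d0 d1 (step_head d0 d1 s) w) (step_value G \<sigma> s)"

definition unit_potential :: "'e set \<Rightarrow> ('e \<Rightarrow> 'v) \<Rightarrow> ('e \<Rightarrow> 'v) \<Rightarrow> 'e \<Rightarrow> ('v \<Rightarrow> complex) \<Rightarrow> bool" where
  "unit_potential T d0 d1 e h \<longleftrightarrow> (\<forall>\<alpha>\<in>T. h (d1 \<alpha>) = h (d0 \<alpha>) + (if \<alpha> = e then 1 else 0))"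

lemma unit_potential_step:
  assumes "unit_potential T d0 d1 e h" "fst s \<in> T"
  shows "h (step_head d0 d1 s) = h (step_tail d0 d1 s) \<longleftrightarrow> fst s \<noteq> e"
  using assms by (cases s) (auto simp: unit_potential_def step_head_def step_tail_def)

lemma unit_potential_walk:
  assumes "unit_potential T d0 d1 e h" "walk T d0 d1 x w y" "e \<notin> fst ` set w"
  shows "h y = h x"
  using assms(2,3)
proof (induction w arbitrary: x)
  case (Cons s w)
  then have "fst s \<in> T" "fst s \<noteq> e" "step_tail d0 d1 s = x" "walk T d0 d1 (step_head d0 d1 s) w y"
    "e \<notin> fst ` set w"
    by auto
  then show ?case
    using Cons.IH unit_potential_step[OF assms(1), of s] by simp
qed simp

lemma unit_potential_step_back:
  assumes "unit_potential T d0 d1 e h" "fst s = e" "fst s' = e" "e \<in> T"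
    and "h (step_tail d0 d1 s') = h (step_head d0 d1 s)"
  shows "s' = (e, \<not> snd s)"
  using assms unfolding unit_potential_def step_tail_def step_head_def
  by (cases s; cases s'; auto split: if_splits)

text \<open>A closed walk that leaves along \<open>e\<close> must come back along \<open>e\<close>, since a unit potential of \<open>e\<close>
  changes only when \<open>e\<close> is crossed.\<close>

lemma closed_walk_returns:
  assumes h: "unit_potential T d0 d1 e h" and e: "e \<in> T"
    and w: "walk T d0 d1 (step_head d0 d1 (e, b)) w (step_tail d0 d1 (e, b))"
  obtains u r where "w = u @ (e, \<not> b) # r"
    "walk T d0 d1 (step_head d0 d1 (e, b)) u (step_head d0 d1 (e, b))"
    "walk T d0 d1 (step_tail d0 d1 (e, b)) r (step_tail d0 d1 (e, b))"
proof -
  let ?x = "step_tail d0 d1 (e, b)" and ?y = "step_head d0 d1 (e, b)"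
  have "h ?y \<noteq> h ?x"
    using unit_potential_step[OF h, of "(e, b)"] e by simp
  then have "\<exists>t\<in>set w. fst t = e"
    using unit_potential_walk[OF h w] by force
  then obtain u s' r where split: "w = u @ s' # r" "fst s' = e" "\<forall>t\<in>set u. fst t \<noteq> e"
    by (rule split_list_first_propE)
  then obtain z where u: "walk T d0 d1 ?y u z" and s'r: "walk T d0 d1 z (s' # r) ?x"
    using w walk_append by metis
  have "h z = h ?y"
    using unit_potential_walk[OF h u] split(3) by force
  then have s': "s' = (e, \<not> b)"
    using unit_potential_step_back[OF h _ split(2) e, of "(e, b)"] s'r by simp
  then have "z = ?y" "walk T d0 d1 ?x r ?x"
    using s'r by auto
  with that split(1) s' u show ?thesis
    by blast
qed

locale groupoid_edges = topological_groupoid G for G :: "('v, 'm) tgpd" +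
  fixes T :: "'e set" and d0 d1 :: "'e \<Rightarrow> 'v" and \<sigma> :: "'e \<Rightarrow> 'm"
  assumes source_obj: "\<alpha> \<in> T \<Longrightarrow> d0 \<alpha> \<in> obj G"
    and target_obj: "\<alpha> \<in> T \<Longrightarrow> d1 \<alpha> \<in> obj G"
    and edge_Hom: "\<alpha> \<in> T \<Longrightarrow> \<sigma> \<alpha> \<in> Hom G (d0 \<alpha>) (d1 \<alpha>)"
begin

lemma step_obj:
  assumes "fst s \<in> T"
  shows "step_tail d0 d1 s \<in> obj G" "step_head d0 d1 s \<in> obj G"
  using assms source_obj target_obj by (simp_all add: step_tail_def step_head_def)

lemma step_value_Hom:
  assumes "fst s \<in> T"
  shows "step_value G \<sigma> s \<in> Hom G (step_tail d0 d1 s) (step_head d0 d1 s)"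
  using assms edge_Hom[of "fst s"] ginv_closed[OF source_obj target_obj edge_Hom, of "fst s"]
  by (simp add: step_value_def step_tail_def step_head_def)

lemma step_value_flip:
  assumes "fst s \<in> T"
  shows "step_value G \<sigma> (fst s, \<not> snd s) = ginv G (step_value G \<sigma> s)"
  using assms ginv_ginv[OF source_obj target_obj edge_Hom, of "fst s"] by (simp add: step_value_def)

lemma walk_obj: "walk T d0 d1 x w y \<Longrightarrow> x \<in> obj G \<Longrightarrow> y \<in> obj G"
proof (induction w arbitrary: x)
  case (Cons s w)
  then have "fst s \<in> T" "walk T d0 d1 (step_head d0 d1 s) w y"
    by auto
  then show ?case
    using Cons.IH step_obj(2) by blast
qed simp

lemma walk_value_Hom: "walk T d0 d1 x w y \<Longrightarrow> x \<in> obj G \<Longrightarrow> walk_value G \<sigma> d0 d1 x w \<in> Hom G x y"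
proof (induction w arbitrary: x)
  case Nil
  then show ?case by (simp add: ident_closed)
next
  case (Cons s w)
  then have s: "fst s \<in> T" "step_tail d0 d1 s = x" and w: "walk T d0 d1 (step_head d0 d1 s) w y"
    by auto
  show ?case
    using comp_closed[OF step_obj[OF s(1)] walk_obj[OF w step_obj(2)[OF s(1)]] step_value_Hom[OF s(1)]
        Cons.IH[OF w step_obj(2)[OF s(1)]]] s(2)
    by simp
qed

lemma walk_value_append:
  assumes "walk T d0 d1 x u z" "walk T d0 d1 z w y" "x \<in> obj G"
  shows "walk_value G \<sigma> d0 d1 x (u @ w) = comp G (walk_value G \<sigma> d0 d1 z w) (walk_value G \<sigma> d0 d1 x u)"
  using assms
proof (induction u arbitrary: x)
  case Nil
  then have w: "walk T d0 d1 x w y"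
    by simp
  then show ?case
    using comp_ident_right[OF Nil(3) walk_obj[OF w Nil(3)] walk_value_Hom[OF w Nil(3)]] Nil(1) by simp
next
  case (Cons s u)
  then have s: "fst s \<in> T" "step_tail d0 d1 s = x" and u: "walk T d0 d1 (step_head d0 d1 s) u z"
    by auto
  have z: "z \<in> obj G"
    using walk_obj[OF u] step_obj[OF s(1)] by simp
  show ?case
    using Cons.IH[OF u Cons.prems(2) step_obj(2)[OF s(1)]] s
      comp_assoc[OF step_obj[OF s(1)] z walk_obj[OF Cons.prems(2) z] step_value_Hom[OF s(1)]
        walk_value_Hom[OF u step_obj(2)[OF s(1)]] walk_value_Hom[OF Cons.prems(2) z]]
    by simp
qed

lemma walk_value_step:
  "fst s \<in> T \<Longrightarrow> walk_value G \<sigma> d0 d1 (step_tail d0 d1 s) [s] = step_value G \<sigma> s"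
  using comp_ident_left[OF step_obj step_value_Hom] by simp

lemma walk_snoc:
  assumes "walk T d0 d1 x w (d0 \<alpha>)" "\<alpha> \<in> T" "x \<in> obj G"
  shows "walk T d0 d1 x (w @ [(\<alpha>, True)]) (d1 \<alpha>)"
  using assms walk_append[of T d0 d1 x w "[(\<alpha>, True)]"] by (auto simp: step_tail_def step_head_def)

lemma walk_value_snoc:
  assumes w: "walk T d0 d1 x w (d0 \<alpha>)" and \<alpha>: "\<alpha> \<in> T" and x: "x \<in> obj G"
  shows "walk_value G \<sigma> d0 d1 x (w @ [(\<alpha>, True)]) = comp G (\<sigma> \<alpha>) (walk_value G \<sigma> d0 d1 x w)"
proof -
  have "walk T d0 d1 (d0 \<alpha>) [(\<alpha>, True)] (d1 \<alpha>)"
    using \<alpha> by (simp add: step_tail_def step_head_def)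
  moreover have "walk_value G \<sigma> d0 d1 (d0 \<alpha>) [(\<alpha>, True)] = \<sigma> \<alpha>"
    using walk_value_step[of "(\<alpha>, True)"] \<alpha> by (simp add: step_tail_def step_value_def)
  ultimately show ?thesis
    using walk_value_append[OF w _ x] by simp
qed

lemma walk_value_reverse:
  assumes "walk T d0 d1 x w y" "x \<in> obj G"
  shows "walk_value G \<sigma> d0 d1 y (reverse_walk w) = ginv G (walk_value G \<sigma> d0 d1 x w)"
  using assms
proof (induction w arbitrary: x)
  case Nil
  then show ?case by (simp add: ginv_ident)
next
  case (Cons s w)
  obtain \<alpha> b where s_eq: "s = (\<alpha>, b)" by fastforce
  from Cons.prems s_eq have s: "fst s \<in> T" "step_tail d0 d1 s = x"
    and w: "walk T d0 d1 (step_head d0 d1 s) w y"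
    by auto
  have y: "y \<in> obj G"
    using walk_obj[OF w step_obj(2)[OF s(1)]] .
  have "walk_value G \<sigma> d0 d1 y (reverse_walk (s # w))
      = comp G (walk_value G \<sigma> d0 d1 (step_head d0 d1 s) [(\<alpha>, \<not> b)])
               (walk_value G \<sigma> d0 d1 y (reverse_walk w))"
    using walk_value_append[OF walk_reverse[OF w] _ y, of "[(\<alpha>, \<not> b)]" x] s s_eq by simp
  also have "\<dots> = comp G (ginv G (step_value G \<sigma> s)) (ginv G (walk_value G \<sigma> d0 d1 (step_head d0 d1 s) w))"
    using Cons.IH[OF w step_obj(2)[OF s(1)]] walk_value_step[of "(\<alpha>, \<not> b)"] step_value_flip[OF s(1)] s s_eq
    by simp
  also have "\<dots> = ginv G (walk_value G \<sigma> d0 d1 x (s # w))"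
    using ginv_comp[OF step_obj[OF s(1)] y step_value_Hom[OF s(1)] walk_value_Hom[OF w step_obj(2)[OF s(1)]]] s
    by simp
  finally show ?case .
qed

lemma closed_walk_value:
  assumes potentials: "\<And>e. e \<in> T \<Longrightarrow> \<exists>h. unit_potential T d0 d1 e h"
  shows "walk T d0 d1 x w x \<Longrightarrow> x \<in> obj G \<Longrightarrow> walk_value G \<sigma> d0 d1 x w = ident G x"
proof (induction "length w" arbitrary: x w rule: less_induct)
  case less
  show ?case
  proof (cases w)
    case Nil
    then show ?thesis by simp
  next
    case (Cons s w')
    obtain e b where s_eq: "s = (e, b)"
      by fastforce
    let ?y = "step_head d0 d1 (e, b)"
    from less.prems Cons s_eq have e: "e \<in> T" and x: "x = step_tail d0 d1 (e, b)"
      and w': "walk T d0 d1 ?y w' x"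
      by auto
    obtain h where "unit_potential T d0 d1 e h"
      using potentials[OF e] by blast
    then obtain u r where split: "w' = u @ (e, \<not> b) # r"
      and u: "walk T d0 d1 ?y u ?y" and r: "walk T d0 d1 x r x"
      using closed_walk_returns e w' x by metis
    have o: "?y \<in> obj G" "x \<in> obj G"
      using step_obj e x by auto
    have "walk_value G \<sigma> d0 d1 ?y u = ident G ?y" "walk_value G \<sigma> d0 d1 x r = ident G x"
      using less.hyps[of u] less.hyps[of r] u r o Cons split by auto
    moreover have "walk T d0 d1 ?y ((e, \<not> b) # r) x"
      using r e x by simp
    ultimately have "walk_value G \<sigma> d0 d1 ?y w' = step_value G \<sigma> (e, \<not> b)"
      using walk_value_append[OF u _ o(1)] split x o comp_ident_right comp_ident_left
        step_value_Hom[of "(e, \<not> b)"] e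
      by simp
    also have "\<dots> = ginv G (step_value G \<sigma> (e, b))"
      using step_value_flip[of "(e, b)"] e by simp
    finally show ?thesis
      using Cons s_eq x comp_ginv_left[OF _ _ step_value_Hom[of "(e, b)"]] step_obj[of "(e, b)"] e
      by simp
  qed
qed

lemma walk_value_unique:
  assumes potentials: "\<And>e. e \<in> T \<Longrightarrow> \<exists>h. unit_potential T d0 d1 e h"
    and w: "walk T d0 d1 x w y" and w': "walk T d0 d1 x w' y" and x: "x \<in> obj G"
  shows "walk_value G \<sigma> d0 d1 x w = walk_value G \<sigma> d0 d1 x w'"
proof -
  have y: "y \<in> obj G" using walk_obj[OF w x] .
  have "walk T d0 d1 x (w @ reverse_walk w') x"
    using w walk_reverse[OF w'] walk_append by metis
  then have "comp G (ginv G (walk_value G \<sigma> d0 d1 x w')) (walk_value G \<sigma> d0 d1 x w) = ident G x"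
    using closed_walk_value[OF potentials] walk_value_append[OF w walk_reverse[OF w'] x]
      walk_value_reverse[OF w' x] x by simp
  then have "ginv G (walk_value G \<sigma> d0 d1 x w') = ginv G (walk_value G \<sigma> d0 d1 x w)"
    using ginv_unique[OF x y walk_value_Hom[OF w x] ginv_closed[OF x y walk_value_Hom[OF w' x]]] by simp
  then show ?thesis
    using ginv_ginv[OF x y] walk_value_Hom[OF w x] walk_value_Hom[OF w' x] by metis
qed

end

section \<open>Logarithms along paths in a contractible space\<close>

lemma exp_eq_imp_increment_eq:
  fixes f g :: "'a::topological_space \<Rightarrow> complex"
  assumes S: "connected S" and "continuous_on S f" "continuous_on S g"
    and exp_fg: "\<And>x. x \<in> S \<Longrightarrow> exp (f x) = exp (g x)" and x: "x \<in> S" and y: "y \<in> S"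
  shows "f x - f y = g x - g y"
proof -
  define k where "k z = (f z - g z) / (2 * of_real pi * \<i>)" for z
  have k_int: "\<exists>n::int. k z = of_int n" if "z \<in> S" for z
  proof -
    from exp_fg[OF that] obtain n :: int where "f z = g z + (of_int (2 * n) * pi) * \<i>"
      by (auto simp: exp_eq)
    then show ?thesis
      by (auto simp: k_def field_simps)
  qed
  have "continuous_on S k"
    unfolding k_def using assms(2,3) by (intro continuous_intros) auto
  then have "k constant_on S"
  proof (rule continuous_discrete_range_constant[OF S])
    fix z assume z: "z \<in> S"
    show "\<exists>e>0. \<forall>y. y \<in> S \<and> k y \<noteq> k z \<longrightarrow> e \<le> norm (k y - k z)"
    proof (intro exI[of _ 1] conjI allI impI)
      fix y assume "y \<in> S \<and> k y \<noteq> k z"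
      with k_int z obtain m n :: int where "k y = of_int m" "k z = of_int n" "m \<noteq> n"
        by metis
      then have "norm (k y - k z) = of_int \<bar>m - n\<bar>"
        by (simp only: norm_of_int flip: of_int_diff)
      with \<open>m \<noteq> n\<close> show "1 \<le> norm (k y - k z)"
        by simp
    qed simp
  qed
  then have "k x = k y"
    using x y by (auto simp: constant_on_def)
  then show ?thesis
    by (simp add: k_def divide_cancel_right algebra_simps)
qed

lemma square_log_increments:
  fixes Q :: "real \<times> real \<Rightarrow> complex"
  assumes Q: "continuous_on ({0..1} \<times> {0..1}) Q" "\<And>q. q \<in> {0..1} \<times> {0..1} \<Longrightarrow> Q q \<noteq> 0"
    and bottom: "continuous_on {0..1} b" "\<And>s. s \<in> {0..1} \<Longrightarrow> Q (s, 0) = exp (b s)"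
    and top: "continuous_on {0..1} t" "\<And>s. s \<in> {0..1} \<Longrightarrow> Q (s, 1) = exp (t s)"
    and left: "continuous_on {0..1} l" "\<And>u. u \<in> {0..1} \<Longrightarrow> Q (0, u) = exp (l u)"
    and right: "continuous_on {0..1} r" "\<And>u. u \<in> {0..1} \<Longrightarrow> Q (1, u) = exp (r u)"
  shows "(b 1 - b 0) + (r 1 - r 0) = (l 1 - l 0) + (t 1 - t 0)"
proof -
  have "contractible ({0..1::real} \<times> {0..1::real})"
    by (intro convex_imp_contractible convex_Times) simp_all
  then obtain M where M: "continuous_on ({0..1} \<times> {0..1}) M"
    and Q_M: "\<And>q. q \<in> {0..1} \<times> {0..1} \<Longrightarrow> Q q = exp (M q)"
    using continuous_logarithm_on_contractible[OF Q(1)] Q(2) by metis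
  have vertical: "continuous_on {0..1} (\<lambda>u. M (s, u))" if "s \<in> {0..1}" for s
    by (rule continuous_on_compose2[OF M]) (use that in \<open>auto intro!: continuous_intros\<close>)
  have horizontal: "continuous_on {0..1} (\<lambda>s. M (s, u))" if "u \<in> {0..1}" for u
    by (rule continuous_on_compose2[OF M]) (use that in \<open>auto intro!: continuous_intros\<close>)
  have B: "b 1 - b 0 = M (1, 0) - M (0, 0)"
    by (rule exp_eq_imp_increment_eq[OF _ bottom(1) horizontal]) (auto simp: bottom(2)[symmetric] Q_M[symmetric])
  have T: "t 1 - t 0 = M (1, 1) - M (0, 1)"
    by (rule exp_eq_imp_increment_eq[OF _ top(1) horizontal]) (auto simp: top(2)[symmetric] Q_M[symmetric])
  have L: "l 1 - l 0 = M (0, 1) - M (0, 0)"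
    by (rule exp_eq_imp_increment_eq[OF _ left(1) vertical]) (auto simp: left(2)[symmetric] Q_M[symmetric])
  have R: "r 1 - r 0 = M (1, 1) - M (1, 0)"
    by (rule exp_eq_imp_increment_eq[OF _ right(1) vertical]) (auto simp: right(2)[symmetric] Q_M[symmetric])
  have "(b 1 - b 0) + (r 1 - r 0) = (M (1, 0) - M (0, 0)) + (M (1, 1) - M (1, 0))"
    by (simp only: B R)
  also have "\<dots> = (M (0, 1) - M (0, 0)) + (M (1, 1) - M (0, 1))"
    by (simp add: algebra_simps)
  also have "\<dots> = (l 1 - l 0) + (t 1 - t 0)"
    by (simp only: L T)
  finally show ?thesis .
qed

lemma homotopy_slice_logarithms:
  fixes G :: "real \<times> 'a \<Rightarrow> complex"
  assumes G: "continuous_map (prod_topology (top_of_set {0..1}) X) euclidean G"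
    and nonzero: "\<And>q. q \<in> topspace (prod_topology (top_of_set {0..1}) X) \<Longrightarrow> G q \<noteq> 0"
  obtains L where "\<And>x. x \<in> topspace X \<Longrightarrow> continuous_on {0..1} (L x)"
    "\<And>x t. x \<in> topspace X \<Longrightarrow> t \<in> {0..1} \<Longrightarrow> G (t, x) = exp (L x t)"
proof -
  have "\<exists>L. continuous_on {0..1} L \<and> (\<forall>t\<in>{0..1}. G (t, x) = exp (L t))" if x: "x \<in> topspace X" for x
  proof -
    have "continuous_map (top_of_set {0..1}) (prod_topology (top_of_set {0..1}) X) (\<lambda>t. (t, x))"
      using x by (simp add: continuous_map_paired)
    from continuous_map_compose[OF this G]
    have "continuous_on {0..1} (\<lambda>t. G (t, x))"
      by (simp add: o_def)
    moreover have "contractible {0..1::real}"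
      by (simp add: convex_imp_contractible)
    moreover have "G (t, x) \<noteq> 0" if "t \<in> {0..1}" for t
      using nonzero x that by simp
    ultimately obtain L where "continuous_on {0..1} L" "\<And>t. t \<in> {0..1} \<Longrightarrow> G (t, x) = exp (L t)"
      using continuous_logarithm_on_contractible by blast
    then show ?thesis
      by blast
  qed
  then show ?thesis
    using that by (metis (no_types))
qed

lemma continuous_map_path_square:
  assumes "continuous_map (top_of_set {0..1::real}) X p"
  shows "continuous_map (top_of_set ({0..1} \<times> {0..1})) (prod_topology (top_of_set {0..1::real}) X)
           (\<lambda>q. (snd q, p (fst q)))"
proof (intro continuous_map_pairedI)
  show "continuous_map (top_of_set ({0..1} \<times> {0..1})) (top_of_set {0..1}) snd"
    by (auto simp: continuous_map_in_subtopology intro: continuous_intros)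
  have "continuous_map (top_of_set ({0..1} \<times> {0..1})) (top_of_set {0..1::real}) fst"
    by (auto simp: continuous_map_in_subtopology intro: continuous_intros)
  from continuous_map_compose[OF this assms]
  show "continuous_map (top_of_set ({0..1} \<times> {0..1})) X (\<lambda>q. p (fst q))"
    by (simp add: o_def)
qed

text \<open>No continuous logarithm of \<open>g\<close> on all of \<open>X\<close> is needed, only logarithms along paths: lifting \<open>g\<close>
  along the contraction defines \<open>\<theta>\<close>, and the contraction of a path sweeps out a square on which \<open>g\<close>
  has a continuous logarithm.\<close>

lemma contractible_space_log_increment:
  fixes g :: "'a \<Rightarrow> complex"
  assumes "contractible_space X" and g: "continuous_map X euclidean g"
    and nonzero: "\<And>x. x \<in> topspace X \<Longrightarrow> g x \<noteq> 0"
  obtains \<theta> where "\<And>p l. \<lbrakk>continuous_map (top_of_set {0..1::real}) X p; continuous_on {0..1} l;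
                        \<And>s. s \<in> {0..1} \<Longrightarrow> g (p s) = exp (l s)\<rbrakk> \<Longrightarrow> l 1 - l 0 = \<theta> (p 1) - \<theta> (p 0)"
proof -
  obtain a and H :: "real \<times> 'a \<Rightarrow> 'a"
    where H: "continuous_map (prod_topology (top_of_set {0..1}) X) X H"
      and H0: "\<And>x. H (0, x) = x" and H1: "\<And>x. H (1, x) = a"
    using assms(1) unfolding contractible_space_def homotopic_with_def id_def by blast
  have gH: "continuous_map (prod_topology (top_of_set {0..1}) X) euclidean (g \<circ> H)"
    using continuous_map_compose[OF H g] .
  have gH_nonzero: "g (H q) \<noteq> 0" if "q \<in> topspace (prod_topology (top_of_set {0..1}) X)" for q
    using nonzero continuous_map_image_subset_topspace[OF H] that by blast
  obtain L where L: "\<And>x. x \<in> topspace X \<Longrightarrow> continuous_on {0..1} (L x)"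
    "\<And>x t. x \<in> topspace X \<Longrightarrow> t \<in> {0..1} \<Longrightarrow> g (H (t, x)) = exp (L x t)"
    using homotopy_slice_logarithms[OF gH] gH_nonzero by (metis comp_apply)
  show ?thesis
  proof (rule that[of "\<lambda>x. L x 0 - L x 1"])
    fix p :: "real \<Rightarrow> 'a" and l :: "real \<Rightarrow> complex"
    assume p: "continuous_map (top_of_set {0..1}) X p" and l: "continuous_on {0..1} l"
      and g_l: "\<And>s. s \<in> {0..1} \<Longrightarrow> g (p s) = exp (l s)"
    have p_X: "p s \<in> topspace X" if "s \<in> {0..1}" for s
      using continuous_map_image_subset_topspace[OF p] that by auto
    from continuous_map_compose[OF continuous_map_path_square[OF p] gH]
    have Q: "continuous_on ({0..1} \<times> {0..1}) (\<lambda>q. g (H (snd q, p (fst q))))"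
      by (simp add: o_def)
    have Q_nonzero: "g (H (snd q, p (fst q))) \<noteq> 0" if "q \<in> {0..1} \<times> {0..1}" for q
      using gH_nonzero p_X that by auto
    then have "g a \<noteq> 0"
      using Q_nonzero[of "(0, 1)"] by (simp add: H1)
    then have top: "g (H (1, p s)) = exp (Ln (g a))" for s
      by (simp add: H1)
    have bottom: "g (H (0, p s)) = exp (l s)" if "s \<in> {0..1}" for s
      using g_l that by (simp add: H0)
    have "(l 1 - l 0) + (L (p 1) 1 - L (p 1) 0) = (L (p 0) 1 - L (p 0) 0) + (Ln (g a) - Ln (g a))"
      using square_log_increments[OF Q Q_nonzero _ _ _ _ L(1)[OF p_X] _ L(1)[OF p_X], of l "\<lambda>_. Ln (g a)"]
        l bottom top L(2)[OF p_X] by simp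
    then show "l 1 - l 0 = (L (p 1) 0 - L (p 1) 1) - (L (p 0) 0 - L (p 0) 1)"
      by (simp add: algebra_simps)
  qed
qed

section \<open>Realizations of Top-graphs and tree paths\<close>

lemma realization_eq:
  "realization V E d0 d1 =
     quotient_topology (sum2_topology (discrete_topology V) (prod_topology E (top_of_set {0..1})))
       (realization_map d0 d1)"
  by (simp add: realization_def)

lemma Inl_in_realization: "x \<in> V \<Longrightarrow> Inl x \<in> topspace (realization V E d0 d1)"
  unfolding realization_eq by (force simp: realization_map_def)

lemma continuous_map_from_realization:
  assumes "\<And>x. x \<in> V \<Longrightarrow> g (Inl x) \<in> topspace Z"
    and "continuous_map (prod_topology E (top_of_set {0..1})) Z (\<lambda>p. g (realization_map d0 d1 (Inr p)))"
  shows "continuous_map (realization V E d0 d1) Z g"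
  unfolding realization_eq
proof (rule continuous_map_from_quotient_topology, rule continuous_map_from_sum2_topology)
  show "continuous_map (discrete_topology V) Z (g \<circ> realization_map d0 d1 \<circ> Inl)"
    using assms(1) by (auto simp: realization_map_def)
  show "continuous_map (prod_topology E (top_of_set {0..1})) Z (g \<circ> realization_map d0 d1 \<circ> Inr)"
    using assms(2) by (simp add: o_def)
qed

lemma continuous_map_realization_edge:
  assumes "\<alpha> \<in> topspace E"
  shows "continuous_map (top_of_set {0..1}) (realization V E d0 d1) (\<lambda>s. realization_map d0 d1 (Inr (\<alpha>, s)))"
proof -
  have "continuous_map (top_of_set {0..1}) (prod_topology E (top_of_set {0..1::real})) (\<lambda>s. (\<alpha>, s))"
    using assms by (simp add: continuous_map_paired)
  from continuous_map_compose[OF continuous_map_compose[OF this continuous_map_Inr_sum2_topology]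
      continuous_map_quotient_topology]
  show ?thesis
    unfolding realization_eq by (simp add: o_def)
qed

lemma connected_realization_edge_closed:
  assumes connected: "connected_space (realization V (discrete_topology T) d0 d1)"
    and v: "v \<in> V" "v \<in> P" and closed: "\<And>\<alpha>. \<alpha> \<in> T \<Longrightarrow> d0 \<alpha> \<in> P \<longleftrightarrow> d1 \<alpha> \<in> P"
  shows "V \<subseteq> P"
proof -
  let ?R = "realization V (discrete_topology T) d0 d1"
  define c where "c = case_sum (\<lambda>x. x \<in> P) (\<lambda>p :: _ \<times> real. d0 (fst p) \<in> P)"
  have c: "continuous_map ?R (discrete_topology UNIV) c"
  proof (rule continuous_map_from_realization)
    have "continuous_map (prod_topology (discrete_topology T) (top_of_set {0..1::real})) (discrete_topology UNIV)
            ((\<lambda>\<alpha>. d0 \<alpha> \<in> P) \<circ> fst)"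
      by (rule continuous_map_compose[OF continuous_map_fst]) simp
    then show "continuous_map (prod_topology (discrete_topology T) (top_of_set {0..1})) (discrete_topology UNIV)
                 (\<lambda>p. c (realization_map d0 d1 (Inr p)))"
      by (rule continuous_map_eq) (auto simp: c_def realization_map_def closed split: if_splits)
  qed simp
  have "openin ?R {p \<in> topspace ?R. c p \<in> {True}}"
    by (rule openin_continuous_map_preimage[OF c]) simp
  moreover have "closedin ?R {p \<in> topspace ?R. c p \<in> {True}}"
    by (rule closedin_continuous_map_preimage[OF c]) simp
  moreover have "Inl v \<in> {p \<in> topspace ?R. c p \<in> {True}}"
    using v Inl_in_realization by (simp add: c_def)
  ultimately have all: "{p \<in> topspace ?R. c p \<in> {True}} = topspace ?R"
    using connected by (auto simp: connected_space_clopen_in)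
  show ?thesis
  proof
    fix x assume "x \<in> V"
    then have "Inl x \<in> {p \<in> topspace ?R. c p \<in> {True}}"
      using all Inl_in_realization by simp
    then show "x \<in> P"
      by (simp add: c_def)
  qed
qed

lemma connected_realization_walk:
  assumes "connected_space (realization V (discrete_topology T) d0 d1)" "v \<in> V" "x \<in> V"
  shows "\<exists>w. walk T d0 d1 v w x"
proof -
  let ?P = "{x. \<exists>w. walk T d0 d1 v w x}"
  have "walk T d0 d1 v (w @ [s]) (step_head d0 d1 s)"
    if "walk T d0 d1 v w (step_tail d0 d1 s)" "fst s \<in> T" for w s
    using that walk_append[of T d0 d1 v w "[s]"] by auto
  then have extend: "step_tail d0 d1 s \<in> ?P \<Longrightarrow> fst s \<in> T \<Longrightarrow> step_head d0 d1 s \<in> ?P" for s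
    by blast
  have "d0 \<alpha> \<in> ?P \<longleftrightarrow> d1 \<alpha> \<in> ?P" if "\<alpha> \<in> T" for \<alpha>
    using extend[of "(\<alpha>, True)"] extend[of "(\<alpha>, False)"] that
    by (simp only: step_tail_def step_head_def fst_conv snd_conv if_True if_False) blast
  moreover have "v \<in> ?P"
    using walk.simps(1)[of T d0 d1 v v] by blast
  ultimately have "V \<subseteq> ?P"
    by (intro connected_realization_edge_closed[OF assms(1,2)])
  then show ?thesis
    using assms(3) by blast
qed

definition edge_winding :: "'e \<Rightarrow> 'v + 'e \<times> real \<Rightarrow> complex" where
  "edge_winding e = case_sum (\<lambda>_. 1) (\<lambda>(\<alpha>, s). exp (2 * of_real pi * \<i> * of_real (if \<alpha> = e then s else 0)))"

lemma edge_winding_edge: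
  "edge_winding e (realization_map d0 d1 (Inr (\<alpha>, s)))
     = exp (2 * of_real pi * \<i> * of_real (if \<alpha> = e then s else 0))"
  by (auto simp: edge_winding_def realization_map_def)

lemma continuous_map_edge_winding:
  "continuous_map (realization V (discrete_topology T) d0 d1) euclidean (edge_winding e)"
proof (rule continuous_map_from_realization)
  have "continuous_map (prod_topology (discrete_topology T) (top_of_set {0..1::real})) euclideanreal
          (\<lambda>p. (if fst p = e then 1 else 0) * snd p)"
  proof (rule continuous_map_real_mult)
    have "continuous_map (prod_topology (discrete_topology T) (top_of_set {0..1::real})) euclideanreal
            ((\<lambda>\<alpha>. if \<alpha> = e then 1 else 0) \<circ> fst)"
      by (rule continuous_map_compose[OF continuous_map_fst]) simp
    then show "continuous_map (prod_topology (discrete_topology T) (top_of_set {0..1::real})) euclideanreal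
            (\<lambda>p. if fst p = e then 1 else 0)"
      by (simp add: o_def)
    show "continuous_map (prod_topology (discrete_topology T) (top_of_set {0..1::real})) euclideanreal snd"
      using continuous_map_snd[of "discrete_topology T" "top_of_set {0..1::real}"]
      by (simp add: continuous_map_in_subtopology)
  qed
  moreover have "continuous_map euclideanreal euclidean (\<lambda>t. exp (2 * of_real pi * \<i> * of_real t))"
    by (simp, intro continuous_intros)
  ultimately show "continuous_map (prod_topology (discrete_topology T) (top_of_set {0..1})) euclidean
                     (\<lambda>p. edge_winding e (realization_map d0 d1 (Inr p)))"
    by (rule continuous_map_eq[OF continuous_map_compose]) (auto simp: edge_winding_edge)
qed simp

lemma contractible_realization_unit_potential:
  fixes T :: "'e set" and d0 d1 :: "'e \<Rightarrow> 'v"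
  assumes "contractible_space (realization V (discrete_topology T) d0 d1)" "e \<in> T"
  shows "\<exists>h. unit_potential T d0 d1 e h"
proof -
  let ?R = "realization V (discrete_topology T) d0 d1"
  have "edge_winding e p \<noteq> 0" for p :: "'v + 'e \<times> real"
    by (cases p) (auto simp: edge_winding_def)
  then obtain \<theta> where \<theta>:
    "\<And>p l. \<lbrakk>continuous_map (top_of_set {0..1::real}) ?R p; continuous_on {0..1} l;
            \<And>s. s \<in> {0..1} \<Longrightarrow> edge_winding e (p s) = exp (l s)\<rbrakk> \<Longrightarrow> l 1 - l 0 = \<theta> (p 1) - \<theta> (p 0)"
    by (rule contractible_space_log_increment[OF assms(1) continuous_map_edge_winding]) blast+
  have "\<theta> (Inl (d1 \<alpha>)) = \<theta> (Inl (d0 \<alpha>)) + (if \<alpha> = e then 2 * of_real pi * \<i> else 0)" if "\<alpha> \<in> T" for \<alpha>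
  proof -
    let ?l = "\<lambda>s. 2 * of_real pi * \<i> * of_real (if \<alpha> = e then s else 0)"
    have "?l 1 - ?l 0 = \<theta> (realization_map d0 d1 (Inr (\<alpha>, 1))) - \<theta> (realization_map d0 d1 (Inr (\<alpha>, 0)))"
      by (rule \<theta>[OF continuous_map_realization_edge])
        (use that in \<open>(cases "\<alpha> = e"; auto simp: edge_winding_edge intro!: continuous_intros)+\<close>)
    then show ?thesis
      by (cases "\<alpha> = e") (auto simp: realization_map_def algebra_simps)
  qed
  then have "unit_potential T d0 d1 e (\<lambda>x. \<theta> (Inl x) / (2 * of_real pi * \<i>))"
    by (auto simp: unit_potential_def field_simps)
  then show ?thesis
    by blast
qed

lemma (in groupoid_edges) tree_paths_exist:
  assumes contractible: "contractible_space (realization (obj G) (discrete_topology T) d0 d1)"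
    and v: "v \<in> obj G"
  obtains p where "\<And>x. x \<in> obj G \<Longrightarrow> p x \<in> Hom G v x" "p v = ident G v"
    "\<And>\<alpha>. \<alpha> \<in> T \<Longrightarrow> p (d1 \<alpha>) = comp G (\<sigma> \<alpha>) (p (d0 \<alpha>))"
proof -
  have potentials: "\<exists>h. unit_potential T d0 d1 e h" if "e \<in> T" for e
    using contractible_realization_unit_potential[OF contractible that] .
  have reach: "\<exists>w. walk T d0 d1 v w x" if "x \<in> obj G" for x
    using connected_realization_walk[OF contractible_imp_connected_space[OF contractible] v that] .
  define p where "p x = walk_value G \<sigma> d0 d1 v (SOME w. walk T d0 d1 v w x)" for x
  have p_walk: "p x = walk_value G \<sigma> d0 d1 v w" if w: "walk T d0 d1 v w x" for x w
  proof -
    have "walk T d0 d1 v (SOME w. walk T d0 d1 v w x) x"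
      using w by (rule someI)
    then show ?thesis
      unfolding p_def using walk_value_unique[OF potentials _ w v] by blast
  qed
  show ?thesis
  proof (rule that)
    show "p x \<in> Hom G v x" if x: "x \<in> obj G" for x
    proof -
      obtain w where "walk T d0 d1 v w x"
        using reach[OF x] by blast
      then show ?thesis
        using p_walk walk_value_Hom[OF _ v] by simp
    qed
    show "p v = ident G v"
      using p_walk[of "[]" v] by simp
    show "p (d1 \<alpha>) = comp G (\<sigma> \<alpha>) (p (d0 \<alpha>))" if \<alpha>: "\<alpha> \<in> T" for \<alpha>
    proof -
      obtain w where w: "walk T d0 d1 v w (d0 \<alpha>)"
        using reach source_obj[OF \<alpha>] by blast
      then show ?thesis
        using p_walk[OF walk_snoc[OF w \<alpha> v]] walk_value_snoc[OF w \<alpha> v] p_walk[OF w] by simp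
    qed
  qed
qed

section \<open>Top-graph morphisms, edge loops and universal properties\<close>

lemma topgraph_ends:
  assumes "topgraph V E d0 d1" "\<alpha> \<in> topspace E"
  shows "d0 \<alpha> \<in> V" "d1 \<alpha> \<in> V"
  using assms continuous_map_image_subset_topspace[of E "discrete_topology V" d0]
    continuous_map_image_subset_topspace[of E "discrete_topology V" d1]
  by (auto simp: topgraph_def)

lemma openin_edges_between:
  assumes "topgraph V E d0 d1" "x \<in> V" "y \<in> V"
  shows "openin E (edges_between E d0 d1 x y)"
proof -
  have d0: "continuous_map E (discrete_topology V) d0" and d1: "continuous_map E (discrete_topology V) d1"
    using assms(1) by (simp_all add: topgraph_def)
  have "openin E {\<alpha> \<in> topspace E. d0 \<alpha> \<in> {x}}"
    by (rule openin_continuous_map_preimage[OF d0]) (use assms(2) in simp)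
  moreover have "openin E {\<alpha> \<in> topspace E. d1 \<alpha> \<in> {y}}"
    by (rule openin_continuous_map_preimage[OF d1]) (use assms(3) in simp)
  ultimately have "openin E ({\<alpha> \<in> topspace E. d0 \<alpha> \<in> {x}} \<inter> {\<alpha> \<in> topspace E. d1 \<alpha> \<in> {y}})"
    by blast
  moreover have "{\<alpha> \<in> topspace E. d0 \<alpha> \<in> {x}} \<inter> {\<alpha> \<in> topspace E. d1 \<alpha> \<in> {y}} = edges_between E d0 d1 x y"
    by (auto simp: edges_between_def)
  ultimately show ?thesis
    by simp
qed

lemma graph_morphism_Hom:
  assumes "top_groupoid G" "topgraph V E d0 d1" "graph_morphism V E d0 d1 G f0 f" "\<alpha> \<in> topspace E"
  shows "f \<alpha> \<in> Hom G (f0 (d0 \<alpha>)) (f0 (d1 \<alpha>))"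
proof -
  interpret topological_groupoid G by unfold_locales (rule assms(1))
  have V: "d0 \<alpha> \<in> V" "d1 \<alpha> \<in> V"
    using topgraph_ends[OF assms(2,4)] .
  then have "continuous_map (subtopology E (edges_between E d0 d1 (d0 \<alpha>) (d1 \<alpha>)))
               (homtop G (f0 (d0 \<alpha>)) (f0 (d1 \<alpha>))) f"
    using assms(3) by (simp add: graph_morphism_def)
  moreover have "\<alpha> \<in> topspace (subtopology E (edges_between E d0 d1 (d0 \<alpha>) (d1 \<alpha>)))"
    using assms(4) by (simp add: edges_between_def)
  ultimately have "f \<alpha> \<in> topspace (homtop G (f0 (d0 \<alpha>)) (f0 (d1 \<alpha>)))"
    using continuous_map_image_subset_topspace by blast
  moreover have "f0 (d0 \<alpha>) \<in> obj G" "f0 (d1 \<alpha>) \<in> obj G"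
    using assms(3) V by (auto simp: graph_morphism_def)
  ultimately show ?thesis
    by (simp add: topspace_homtop)
qed

lemma graph_morphism_codiscrete_groupoid:
  assumes "continuous_map E \<tau> f"
  shows "graph_morphism V E d0 d1 (codiscrete_groupoid V F \<tau>) id (\<lambda>\<alpha>. (d0 \<alpha>, f \<alpha>, d1 \<alpha>))"
  unfolding graph_morphism_def continuous_map_codiscrete_groupoid
  using continuous_map_from_subtopology[OF assms] by (auto simp: edges_between_def)

lemma maximal_tree_subset:
  "maximal_tree V E d0 d1 T \<Longrightarrow> T \<subseteq> topspace E"
  by (simp add: maximal_tree_def)

lemma maximal_tree_contractible:
  assumes "maximal_tree V E d0 d1 T"
  shows "contractible_space (realization V (discrete_topology T) d0 d1)"
proof -
  have "subtopology E T = discrete_topology T"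
    using assms by (simp add: maximal_tree_def is_tree_def Int_absorb1)
  then show ?thesis
    using assms by (simp add: maximal_tree_def is_tree_def)
qed

lemma continuous_map_graph_quotient:
  assumes "continuous_map E Y f" and "\<And>\<alpha>. \<alpha> \<in> T \<Longrightarrow> f \<alpha> = c"
  shows "continuous_map (graph_quotient E T) Y (case_option c f)"
proof -
  have "case_option c f \<circ> collapse T = f"
    using assms(2) by (auto simp: collapse_def)
  with assms(1) show ?thesis
    unfolding graph_quotient_def by (intro continuous_map_from_quotient_topology) simp
qed

definition edge_loop :: "('v, 'm) tgpd \<Rightarrow> ('v \<Rightarrow> 'm) \<Rightarrow> ('e \<Rightarrow> 'm) \<Rightarrow> ('e \<Rightarrow> 'v) \<Rightarrow> ('e \<Rightarrow> 'v) \<Rightarrow> 'e \<Rightarrow> 'm" where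
  "edge_loop G p \<sigma> d0 d1 \<alpha> = comp G (ginv G (p (d1 \<alpha>))) (comp G (\<sigma> \<alpha>) (p (d0 \<alpha>)))"

definition path_conjugation :: "('v, 'm) tgpd \<Rightarrow> ('v \<Rightarrow> 'm) \<Rightarrow> ('f \<Rightarrow> 'm) \<Rightarrow> 'v \<times> 'f \<times> 'v \<Rightarrow> 'm" where
  "path_conjugation G p \<Psi> q = comp G (p (snd (snd q))) (comp G (\<Psi> (fst (snd q))) (ginv G (p (fst q))))"

context topological_groupoid
begin

lemma continuous_map_edge_loop:
  assumes "topgraph (obj G) E d0 d1" "graph_morphism (obj G) E d0 d1 G id \<sigma>"
    and "v \<in> obj G" "\<And>x. x \<in> obj G \<Longrightarrow> p x \<in> Hom G v x"
  shows "continuous_map E (homtop G v v) (edge_loop G p \<sigma> d0 d1)"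
proof (rule pasting_lemma[of "obj G \<times> obj G" E "\<lambda>(x, y). edges_between E d0 d1 x y" _ "\<lambda>_. edge_loop G p \<sigma> d0 d1"])
  show "openin E ((\<lambda>(x, y). edges_between E d0 d1 x y) i)" if "i \<in> obj G \<times> obj G" for i
    using openin_edges_between[OF assms(1)] that by auto
  show "\<exists>j. j \<in> obj G \<times> obj G \<and> \<alpha> \<in> (\<lambda>(x, y). edges_between E d0 d1 x y) j
          \<and> edge_loop G p \<sigma> d0 d1 \<alpha> = edge_loop G p \<sigma> d0 d1 \<alpha>" if "\<alpha> \<in> topspace E" for \<alpha>
    using topgraph_ends[OF assms(1) that] that by (auto simp: edges_between_def)
  show "continuous_map (subtopology E ((\<lambda>(x, y). edges_between E d0 d1 x y) i)) (homtop G v v)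
          (edge_loop G p \<sigma> d0 d1)" if i_obj: "i \<in> obj G \<times> obj G" for i
  proof -
    obtain x y where i: "i = (x, y)" "x \<in> obj G" "y \<in> obj G"
      using i_obj by blast
    let ?S = "subtopology E (edges_between E d0 d1 x y)"
    have "continuous_map ?S (homtop G v x) (\<lambda>_. p x)"
      using assms(4) i topspace_homtop[OF assms(3)] by simp
    moreover have "continuous_map ?S (homtop G x y) \<sigma>"
      using assms(2) i by (simp add: graph_morphism_def)
    ultimately have "continuous_map ?S (homtop G v y) (\<lambda>\<alpha>. comp G (\<sigma> \<alpha>) (p x))"
      by (rule continuous_map_comp[OF assms(3) i(2,3)])
    moreover have "continuous_map ?S (homtop G y v) (\<lambda>_. ginv G (p y))"
      using ginv_closed[OF assms(3) i(3) assms(4)[OF i(3)]] topspace_homtop[OF i(3) assms(3)] by simp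
    ultimately have "continuous_map ?S (homtop G v v) (\<lambda>\<alpha>. comp G (ginv G (p y)) (comp G (\<sigma> \<alpha>) (p x)))"
      by (rule continuous_map_comp[OF assms(3) i(3) assms(3)])
    then have "continuous_map ?S (homtop G v v) (edge_loop G p \<sigma> d0 d1)"
      by (rule continuous_map_eq) (auto simp: edge_loop_def edges_between_def)
    then show ?thesis
      by (simp add: i(1))
  qed
qed auto

lemma edge_loop_tree_edge:
  assumes "v \<in> obj G" "d1 \<alpha> \<in> obj G" "p (d1 \<alpha>) \<in> Hom G v (d1 \<alpha>)"
    and "p (d1 \<alpha>) = comp G (\<sigma> \<alpha>) (p (d0 \<alpha>))"
  shows "edge_loop G p \<sigma> d0 d1 \<alpha> = ident G v"
  using assms comp_ginv_left by (simp add: edge_loop_def)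

lemma path_conjugation_edge_loop:
  assumes v: "v \<in> obj G" and x: "x \<in> obj G" and y: "y \<in> obj G"
    and px: "p x \<in> Hom G v x" and py: "p y \<in> Hom G v y" and s: "s \<in> Hom G x y"
  shows "comp G (p y) (comp G (comp G (ginv G (p y)) (comp G s (p x))) (ginv G (p x))) = s"
proof -
  have "comp G (comp G (ginv G (p y)) (comp G s (p x))) (ginv G (p x))
      = comp G (ginv G (p y)) (comp G (comp G s (p x)) (ginv G (p x)))"
    using comp_assoc[OF x v y v ginv_closed[OF v x px] comp_closed[OF v x y px s] ginv_closed[OF v y py]]
    by simp
  also have "\<dots> = comp G (ginv G (p y)) s"
    using cancel_ginv_right[OF v x y px s] by simp
  finally have "comp G (p y) (comp G (comp G (ginv G (p y)) (comp G s (p x))) (ginv G (p x)))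
      = comp G (p y) (comp G (ginv G (p y)) s)"
    by simp
  also have "\<dots> = comp G (comp G (p y) (ginv G (p y))) s"
    using comp_assoc[OF x y v y s ginv_closed[OF v y py] py] .
  also have "\<dots> = s"
    using comp_ginv_right[OF v y py] comp_ident_left[OF x y s] by simp
  finally show ?thesis .
qed

lemma comp_conjugates:
  assumes "v \<in> obj G" "x \<in> obj G" "y \<in> obj G" "z \<in> obj G"
    and "px \<in> Hom G v x" "py \<in> Hom G v y" "pz \<in> Hom G v z" "a \<in> Hom G v v" "b \<in> Hom G v v"
  shows "comp G (comp G pz (comp G b (ginv G py))) (comp G py (comp G a (ginv G px)))
       = comp G pz (comp G (comp G b a) (ginv G px))"
proof -
  have ipx: "ginv G px \<in> Hom G x v" and ipy: "ginv G py \<in> Hom G y v"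
    using ginv_closed assms by auto
  have X: "comp G a (ginv G px) \<in> Hom G x v"
    using comp_closed[OF assms(2,1,1) ipx assms(8)] .
  have Y: "comp G py (comp G a (ginv G px)) \<in> Hom G x y"
    using comp_closed[OF assms(2,1,3) X assms(6)] .
  have B: "comp G b (ginv G py) \<in> Hom G y v"
    using comp_closed[OF assms(3,1,1) ipy assms(9)] .
  have "comp G (comp G pz (comp G b (ginv G py))) (comp G py (comp G a (ginv G px)))
      = comp G pz (comp G (comp G b (ginv G py)) (comp G py (comp G a (ginv G px))))"
    using comp_assoc[OF assms(2,3,1,4) Y B assms(7)] by simp
  also have "comp G (comp G b (ginv G py)) (comp G py (comp G a (ginv G px)))
      = comp G b (comp G (ginv G py) (comp G py (comp G a (ginv G px))))"
    using comp_assoc[OF assms(2,3,1,1) Y ipy assms(9)] by simp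
  also have "comp G (ginv G py) (comp G py (comp G a (ginv G px))) = comp G a (ginv G px)"
    by (rule cancel_ginv_left[OF assms(2,1,3) X assms(6)])
  also have "comp G b (comp G a (ginv G px)) = comp G (comp G b a) (ginv G px)"
    using comp_assoc[OF assms(2,1,1,1) ipx assms(8,9)] .
  finally show ?thesis .
qed

lemma continuous_map_path_conjugation:
  assumes v: "v \<in> obj G" and x: "x \<in> obj G" and y: "y \<in> obj G"
    and p: "p x \<in> Hom G v x" "p y \<in> Hom G v y" and \<Psi>: "continuous_map \<tau> (homtop G v v) \<Psi>"
  shows "continuous_map (homtop (codiscrete_groupoid V F \<tau>) x y) (homtop G x y) (path_conjugation G p \<Psi>)"
proof -
  let ?H = "homtop (codiscrete_groupoid V F \<tau>) x y"
  from continuous_map_compose[OF continuous_map_codiscrete_label \<Psi>]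
  have "continuous_map ?H (homtop G v v) (\<lambda>q. \<Psi> (fst (snd q)))"
    by (simp add: o_def)
  moreover have "continuous_map ?H (homtop G x v) (\<lambda>_. ginv G (p x))"
    using ginv_closed[OF v x p(1)] topspace_homtop[OF x v] by simp
  ultimately have "continuous_map ?H (homtop G x v) (\<lambda>q. comp G (\<Psi> (fst (snd q))) (ginv G (p x)))"
    by (rule continuous_map_comp[OF x v v, rotated])
  moreover have "continuous_map ?H (homtop G v y) (\<lambda>_. p y)"
    using p(2) topspace_homtop[OF v y] by simp
  ultimately have "continuous_map ?H (homtop G x y) (\<lambda>q. comp G (p y) (comp G (\<Psi> (fst (snd q))) (ginv G (p x))))"
    by (rule continuous_map_comp[OF x v y])
  then show ?thesis
    by (rule continuous_map_eq) (auto simp: path_conjugation_def)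
qed

lemma cont_functor_path_conjugation:
  assumes F: "topological_group F \<tau>" and v: "v \<in> obj G" and p: "\<And>x. x \<in> obj G \<Longrightarrow> p x \<in> Hom G v x"
    and \<Psi>: "\<Psi> \<in> hom F (vertex_group G v)" "continuous_map \<tau> (homtop G v v) \<Psi>"
  shows "cont_functor (codiscrete_groupoid (obj G) F \<tau>) G id (path_conjugation G p \<Psi>)"
  unfolding cont_functor_def
proof (intro conjI ballI)
  interpret F: group F
    using F by (simp add: topological_group_def)
  have \<Psi>_Hom: "\<Psi> a \<in> Hom G v v" if "a \<in> carrier F" for a
    using hom_in_carrier[OF \<Psi>(1) that] by (simp add: vertex_group_def)
  show "id ` obj (codiscrete_groupoid (obj G) F \<tau>) \<subseteq> obj G"
    by simp
  fix x y z
  assume "x \<in> obj (codiscrete_groupoid (obj G) F \<tau>)" "y \<in> obj (codiscrete_groupoid (obj G) F \<tau>)"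
  then have x: "x \<in> obj G" and y: "y \<in> obj G"
    by simp_all
  show "continuous_map (homtop (codiscrete_groupoid (obj G) F \<tau>) x y) (homtop G (id x) (id y))
          (path_conjugation G p \<Psi>)"
    using continuous_map_path_conjugation[OF v x y p[OF x] p[OF y] \<Psi>(2)] by simp
  show "path_conjugation G p \<Psi> (ident (codiscrete_groupoid (obj G) F \<tau>) x) = ident G (id x)"
    using hom_one[OF \<Psi>(1) F.is_group group_vertex_group[OF v]] comp_ident_left[OF x v ginv_closed[OF v x p[OF x]]]
      comp_ginv_right[OF v x p[OF x]]
    by (simp add: path_conjugation_def vertex_group_def)
  assume "z \<in> obj (codiscrete_groupoid (obj G) F \<tau>)"
  then have z: "z \<in> obj G"
    by simp
  fix f g
  assume "f \<in> Hom (codiscrete_groupoid (obj G) F \<tau>) x y" "g \<in> Hom (codiscrete_groupoid (obj G) F \<tau>) y z"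
  then obtain a b where f: "f = (x, a, y)" "a \<in> carrier F" and g: "g = (y, b, z)" "b \<in> carrier F"
    by auto
  have "\<Psi> (b \<otimes>\<^bsub>F\<^esub> a) = comp G (\<Psi> b) (\<Psi> a)"
    using hom_mult[OF \<Psi>(1) g(2) f(2)] by (simp add: vertex_group_def)
  then show "path_conjugation G p \<Psi> (comp (codiscrete_groupoid (obj G) F \<tau>) g f)
      = comp G (path_conjugation G p \<Psi> g) (path_conjugation G p \<Psi> f)"
    using comp_conjugates[OF v x y z p[OF x] p[OF y] p[OF z] \<Psi>_Hom[OF f(2)] \<Psi>_Hom[OF g(2)]] f g
    by (simp add: path_conjugation_def)
qed

lemma conjugate_ident:
  assumes "v \<in> obj G" "a \<in> Hom G v v"
  shows "comp G (ident G v) (comp G a (ginv G (ident G v))) = a"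
  using assms by (simp add: ginv_ident comp_ident_right comp_ident_left comp_closed ident_closed)

end

lemma free_top_groupoid_universal:
  assumes "free_top_groupoid V E d0 d1 G \<sigma> TYPE('w) TYPE('n)"
    and "top_groupoid (H :: ('w, 'n) tgpd)" "graph_morphism V E d0 d1 H f0 f"
  shows "\<exists>F. cont_functor G H f0 F \<and> (\<forall>\<alpha>\<in>topspace E. F (\<sigma> \<alpha>) = f \<alpha>)"
    and "\<forall>F F'. cont_functor G H f0 F \<and> (\<forall>\<alpha>\<in>topspace E. F (\<sigma> \<alpha>) = f \<alpha>) \<and>
            cont_functor G H f0 F' \<and> (\<forall>\<alpha>\<in>topspace E. F' (\<sigma> \<alpha>) = f \<alpha>) \<longrightarrow>
            (\<forall>x\<in>V. \<forall>y\<in>V. \<forall>g\<in>Hom G x y. F g = F' g)"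
  using assms(1)[unfolded free_top_groupoid_def, THEN conjunct2, THEN conjunct2, THEN conjunct2,
      rule_format, OF conjI[OF assms(2,3)]]
  by simp_all

lemma graev_free_group_universal:
  assumes "graev_free_group X b F \<tau> \<sigma> TYPE('h)"
    and "topological_group (H :: 'h monoid) \<tau>H" "continuous_map X \<tau>H f" "f b = \<one>\<^bsub>H\<^esub>"
  shows "\<exists>\<phi>. \<phi> \<in> hom F H \<and> continuous_map \<tau> \<tau>H \<phi> \<and> (\<forall>x\<in>topspace X. \<phi> (\<sigma> x) = f x)"
    and "\<forall>\<phi> \<psi>. \<phi> \<in> hom F H \<and> continuous_map \<tau> \<tau>H \<phi> \<and> (\<forall>x\<in>topspace X. \<phi> (\<sigma> x) = f x) \<and>
            \<psi> \<in> hom F H \<and> continuous_map \<tau> \<tau>H \<psi> \<and> (\<forall>x\<in>topspace X. \<psi> (\<sigma> x) = f x) \<longrightarrow>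
            (\<forall>g\<in>carrier F. \<phi> g = \<psi> g)"
  using assms(1)[unfolded graev_free_group_def, THEN conjunct2, THEN conjunct2, THEN conjunct2,
      THEN conjunct2, rule_format, OF conjI[OF assms(2) conjI[OF assms(3,4)]]]
  by simp_all

section \<open>The vertex group of the free Top-groupoid\<close>

locale graev_comparison =
  fixes V :: "'v set" and E :: "'e topology" and d0 d1 :: "'e \<Rightarrow> 'v" and T :: "'e set" and v :: 'v
    and FG :: "('v, 'm) tgpd" and \<sigma> :: "'e \<Rightarrow> 'm"
    and FGr :: "'f monoid" and \<tau> :: "'f topology" and \<sigma>s :: "'e option \<Rightarrow> 'f"
  assumes topgraph: "topgraph V E d0 d1"
    and maximal_tree: "maximal_tree V E d0 d1 T"
    and v: "v \<in> V"
    and free: "free_top_groupoid V E d0 d1 FG \<sigma> TYPE('v) TYPE('m)"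
    and free_codiscrete: "free_top_groupoid V E d0 d1 FG \<sigma> TYPE('v) TYPE('v \<times> 'f \<times> 'v)"
    and graev: "graev_free_group (graph_quotient E T) None FGr \<tau> \<sigma>s TYPE('f)"
    and graev_vertex_group: "graev_free_group (graph_quotient E T) None FGr \<tau> \<sigma>s TYPE('m)"
begin

lemma obj_FG: "obj FG = V"
  and \<sigma>_morphism: "graph_morphism V E d0 d1 FG id \<sigma>"
  using free by (simp_all add: free_top_groupoid_def)

lemma v_obj: "v \<in> obj FG"
  using v obj_FG by simp

lemma topological_group: "topological_group FGr \<tau>"
  and continuous_\<sigma>s: "continuous_map (graph_quotient E T) \<tau> \<sigma>s"
  and \<sigma>s_None: "\<sigma>s None = \<one>\<^bsub>FGr\<^esub>"
  using graev by (simp_all add: graev_free_group_def)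

sublocale FG: topological_groupoid FG
  using free by unfold_locales (simp add: free_top_groupoid_def)

sublocale FGr: group FGr
  using topological_group by (simp add: topological_group_def)

lemma \<sigma>_Hom: "\<alpha> \<in> topspace E \<Longrightarrow> \<sigma> \<alpha> \<in> Hom FG (d0 \<alpha>) (d1 \<alpha>)"
  using graph_morphism_Hom[OF FG.top_groupoid topgraph \<sigma>_morphism] by simp

lemma \<sigma>s_collapse_closed:
  assumes "\<alpha> \<in> topspace E"
  shows "\<sigma>s (collapse T \<alpha>) \<in> carrier FGr"
proof -
  have "collapse T \<alpha> \<in> topspace (graph_quotient E T)"
    using assms by (simp add: graph_quotient_def)
  then show ?thesis
    using continuous_map_image_subset_topspace[OF continuous_\<sigma>s] topological_group
    by (auto simp: topological_group_def)
qed

sublocale FG_T: groupoid_edges FG T d0 d1 \<sigma>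
  using topgraph_ends[OF topgraph] maximal_tree_subset[OF maximal_tree] \<sigma>_Hom obj_FG
  by unfold_locales auto

definition tree_path :: "'v \<Rightarrow> 'm" where
  "tree_path = (SOME p. (\<forall>x\<in>V. p x \<in> Hom FG v x) \<and> p v = ident FG v
                        \<and> (\<forall>\<alpha>\<in>T. p (d1 \<alpha>) = comp FG (\<sigma> \<alpha>) (p (d0 \<alpha>))))"

lemma tree_path: "x \<in> V \<Longrightarrow> tree_path x \<in> Hom FG v x"
  and tree_path_base: "tree_path v = ident FG v"
  and tree_path_edge: "\<alpha> \<in> T \<Longrightarrow> tree_path (d1 \<alpha>) = comp FG (\<sigma> \<alpha>) (tree_path (d0 \<alpha>))"
proof -
  obtain p where "\<And>x. x \<in> V \<Longrightarrow> p x \<in> Hom FG v x" "p v = ident FG v"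
    "\<And>\<alpha>. \<alpha> \<in> T \<Longrightarrow> p (d1 \<alpha>) = comp FG (\<sigma> \<alpha>) (p (d0 \<alpha>))"
    using FG_T.tree_paths_exist maximal_tree_contractible[OF maximal_tree] v obj_FG by metis
  then have "\<exists>p. (\<forall>x\<in>V. p x \<in> Hom FG v x) \<and> p v = ident FG v
               \<and> (\<forall>\<alpha>\<in>T. p (d1 \<alpha>) = comp FG (\<sigma> \<alpha>) (p (d0 \<alpha>)))"
    by blast
  then have "(\<forall>x\<in>V. tree_path x \<in> Hom FG v x) \<and> tree_path v = ident FG v
               \<and> (\<forall>\<alpha>\<in>T. tree_path (d1 \<alpha>) = comp FG (\<sigma> \<alpha>) (tree_path (d0 \<alpha>)))"
    unfolding tree_path_def by (rule someI_ex)
  then show "x \<in> V \<Longrightarrow> tree_path x \<in> Hom FG v x" "tree_path v = ident FG v"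
    "\<alpha> \<in> T \<Longrightarrow> tree_path (d1 \<alpha>) = comp FG (\<sigma> \<alpha>) (tree_path (d0 \<alpha>))"
    by blast+
qed

definition labelling_functor :: "'m \<Rightarrow> 'v \<times> 'f \<times> 'v" where
  "labelling_functor = (SOME \<Phi>. cont_functor FG (codiscrete_groupoid V FGr \<tau>) id \<Phi>
                          \<and> (\<forall>\<alpha>\<in>topspace E. \<Phi> (\<sigma> \<alpha>) = (d0 \<alpha>, \<sigma>s (collapse T \<alpha>), d1 \<alpha>)))"

lemma labelling_functor: "cont_functor FG (codiscrete_groupoid V FGr \<tau>) id labelling_functor"
  and labelling_functor_edge:
    "\<alpha> \<in> topspace E \<Longrightarrow> labelling_functor (\<sigma> \<alpha>) = (d0 \<alpha>, \<sigma>s (collapse T \<alpha>), d1 \<alpha>)"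
proof -
  have "continuous_map E \<tau> (\<sigma>s \<circ> collapse T)"
    using continuous_map_compose[OF continuous_map_quotient_topology continuous_\<sigma>s[unfolded graph_quotient_def]] .
  then have "graph_morphism V E d0 d1 (codiscrete_groupoid V FGr \<tau>) id (\<lambda>\<alpha>. (d0 \<alpha>, \<sigma>s (collapse T \<alpha>), d1 \<alpha>))"
    using graph_morphism_codiscrete_groupoid by (simp add: o_def)
  from free_top_groupoid_universal(1)[OF free_codiscrete top_groupoid_codiscrete_groupoid[OF topological_group] this]
  have "cont_functor FG (codiscrete_groupoid V FGr \<tau>) id labelling_functor
          \<and> (\<forall>\<alpha>\<in>topspace E. labelling_functor (\<sigma> \<alpha>) = (d0 \<alpha>, \<sigma>s (collapse T \<alpha>), d1 \<alpha>))"
    unfolding labelling_functor_def by (rule someI_ex)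
  then show "cont_functor FG (codiscrete_groupoid V FGr \<tau>) id labelling_functor"
    "\<alpha> \<in> topspace E \<Longrightarrow> labelling_functor (\<sigma> \<alpha>) = (d0 \<alpha>, \<sigma>s (collapse T \<alpha>), d1 \<alpha>)"
    by blast+
qed

sublocale \<Phi>: functor_to_codiscrete FG V FGr \<tau> labelling_functor
  by unfold_locales (rule topological_group, rule labelling_functor)

lemma label_edge: "\<alpha> \<in> topspace E \<Longrightarrow> \<Phi>.label (\<sigma> \<alpha>) = \<sigma>s (collapse T \<alpha>)"
  by (simp add: \<Phi>.label_def labelling_functor_edge)

lemma label_tree_path: "x \<in> V \<Longrightarrow> \<Phi>.label (tree_path x) = \<one>\<^bsub>FGr\<^esub>"
proof -
  have "V \<subseteq> {x. \<Phi>.label (tree_path x) = \<one>\<^bsub>FGr\<^esub>}"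
  proof (rule connected_realization_edge_closed[OF _ v])
    show "connected_space (realization V (discrete_topology T) d0 d1)"
      using maximal_tree_contractible[OF maximal_tree] by (rule contractible_imp_connected_space)
    show "v \<in> {x. \<Phi>.label (tree_path x) = \<one>\<^bsub>FGr\<^esub>}"
      using \<Phi>.label_ident v obj_FG tree_path_base by simp
    show "d0 \<alpha> \<in> {x. \<Phi>.label (tree_path x) = \<one>\<^bsub>FGr\<^esub>} \<longleftrightarrow> d1 \<alpha> \<in> {x. \<Phi>.label (tree_path x) = \<one>\<^bsub>FGr\<^esub>}"
      if \<alpha>: "\<alpha> \<in> T" for \<alpha>
    proof -
      have \<alpha>E: "\<alpha> \<in> topspace E"
        using \<alpha> maximal_tree_subset[OF maximal_tree] by blast
      have "\<Phi>.label (tree_path (d1 \<alpha>)) = \<Phi>.label (\<sigma> \<alpha>) \<otimes>\<^bsub>FGr\<^esub> \<Phi>.label (tree_path (d0 \<alpha>))"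
        using \<Phi>.label_comp[OF _ _ _ tree_path \<sigma>_Hom[OF \<alpha>E]] tree_path_edge[OF \<alpha>] v obj_FG
          topgraph_ends[OF topgraph \<alpha>E] by simp
      also have "\<Phi>.label (\<sigma> \<alpha>) = \<one>\<^bsub>FGr\<^esub>"
        using label_edge[OF \<alpha>E] \<alpha> \<sigma>s_None by (simp add: collapse_def)
      finally show ?thesis
        using \<Phi>.label_closed[OF _ _ tree_path] v obj_FG topgraph_ends[OF topgraph \<alpha>E] by simp
    qed
  qed
  then show "x \<in> V \<Longrightarrow> \<Phi>.label (tree_path x) = \<one>\<^bsub>FGr\<^esub>"
    by blast
qed

abbreviation loop :: "'e \<Rightarrow> 'm" where
  "loop \<equiv> edge_loop FG tree_path \<sigma> d0 d1"

lemma loop_tree_edge: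
  assumes "\<alpha> \<in> T"
  shows "loop \<alpha> = ident FG v"
proof -
  have d1: "d1 \<alpha> \<in> V"
    using FG_T.target_obj[OF assms] obj_FG by simp
  show ?thesis
    using FG.edge_loop_tree_edge[of v d1 \<alpha> tree_path \<sigma> d0, OF _ _ tree_path[OF d1] tree_path_edge[OF assms]]
      d1 v obj_FG
    by simp
qed

lemma label_loop:
  assumes "\<alpha> \<in> topspace E"
  shows "\<Phi>.label (loop \<alpha>) = \<sigma>s (collapse T \<alpha>)"
proof -
  have ends: "d0 \<alpha> \<in> obj FG" "d1 \<alpha> \<in> obj FG"
    using topgraph_ends[OF topgraph assms] obj_FG by simp_all
  have "\<Phi>.label (loop \<alpha>)
      = \<Phi>.label (ginv FG (tree_path (d1 \<alpha>))) \<otimes>\<^bsub>FGr\<^esub> (\<Phi>.label (\<sigma> \<alpha>) \<otimes>\<^bsub>FGr\<^esub> \<Phi>.label (tree_path (d0 \<alpha>)))"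
    unfolding edge_loop_def
    using \<Phi>.label_comp[OF v_obj ends(2) v_obj FG.comp_closed[OF v_obj ends tree_path \<sigma>_Hom[OF assms]]
        FG.ginv_closed[OF v_obj ends(2) tree_path]]
      \<Phi>.label_comp[OF v_obj ends tree_path \<sigma>_Hom[OF assms]] ends obj_FG
    by simp
  also have "\<dots> = \<sigma>s (collapse T \<alpha>)"
    using \<Phi>.label_ginv[OF v_obj ends(2) tree_path] label_tree_path label_edge[OF assms]
      \<sigma>s_collapse_closed[OF assms] ends obj_FG by simp
  finally show ?thesis .
qed

lemma continuous_map_loops:
  "continuous_map (graph_quotient E T) (homtop FG v v) (case_option (ident FG v) loop)"
  using FG.continuous_map_edge_loop[OF _ _ _ tree_path] topgraph \<sigma>_morphism v obj_FG loop_tree_edge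
  by (intro continuous_map_graph_quotient) simp_all

definition loop_hom :: "'f \<Rightarrow> 'm" where
  "loop_hom = (SOME \<Psi>. \<Psi> \<in> hom FGr (vertex_group FG v) \<and> continuous_map \<tau> (homtop FG v v) \<Psi>
                   \<and> (\<forall>z\<in>topspace (graph_quotient E T). \<Psi> (\<sigma>s z) = case_option (ident FG v) loop z))"

lemma loop_hom: "loop_hom \<in> hom FGr (vertex_group FG v)"
  and continuous_map_loop_hom: "continuous_map \<tau> (homtop FG v v) loop_hom"
  and loop_hom_generator: "\<alpha> \<in> topspace E \<Longrightarrow> loop_hom (\<sigma>s (collapse T \<alpha>)) = loop \<alpha>"
proof -
  have "case_option (ident FG v) loop None = \<one>\<^bsub>vertex_group FG v\<^esub>"
    by (simp add: vertex_group_def)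
  from graev_free_group_universal(1)[OF graev_vertex_group FG.topological_group_vertex_group[OF v_obj]
      continuous_map_loops this]
  have P: "loop_hom \<in> hom FGr (vertex_group FG v) \<and> continuous_map \<tau> (homtop FG v v) loop_hom
          \<and> (\<forall>z\<in>topspace (graph_quotient E T). loop_hom (\<sigma>s z) = case_option (ident FG v) loop z)"
    unfolding loop_hom_def by (rule someI_ex)
  then show "loop_hom \<in> hom FGr (vertex_group FG v)" "continuous_map \<tau> (homtop FG v v) loop_hom"
    by blast+
  show "loop_hom (\<sigma>s (collapse T \<alpha>)) = loop \<alpha>" if "\<alpha> \<in> topspace E" for \<alpha>
  proof -
    have "collapse T \<alpha> \<in> topspace (graph_quotient E T)"
      using that by (simp add: graph_quotient_def)
    with P have "loop_hom (\<sigma>s (collapse T \<alpha>)) = case_option (ident FG v) loop (collapse T \<alpha>)"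
      by blast
    then show ?thesis
      using loop_tree_edge by (simp add: collapse_def)
  qed
qed

lemma loop_hom_Hom: "g \<in> carrier FGr \<Longrightarrow> loop_hom g \<in> Hom FG v v"
  using hom_in_carrier[OF loop_hom] by (simp add: vertex_group_def)

lemma hom_label_loop_hom: "(\<lambda>g. \<Phi>.label (loop_hom g)) \<in> hom FGr FGr"
proof (rule homI)
  show "\<Phi>.label (loop_hom g) \<in> carrier FGr" if "g \<in> carrier FGr" for g
    using \<Phi>.label_closed[OF v_obj v_obj loop_hom_Hom[OF that]] .
  show "\<Phi>.label (loop_hom (g \<otimes>\<^bsub>FGr\<^esub> h)) = \<Phi>.label (loop_hom g) \<otimes>\<^bsub>FGr\<^esub> \<Phi>.label (loop_hom h)"
    if "g \<in> carrier FGr" "h \<in> carrier FGr" for g h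
    using hom_mult[OF loop_hom that]
      \<Phi>.label_comp[OF v_obj v_obj v_obj loop_hom_Hom[OF that(2)] loop_hom_Hom[OF that(1)]]
    by (simp add: vertex_group_def)
qed

lemma label_loop_hom_generator:
  assumes "z \<in> topspace (graph_quotient E T)"
  shows "\<Phi>.label (loop_hom (\<sigma>s z)) = \<sigma>s z"
proof -
  obtain \<alpha> where "\<alpha> \<in> topspace E" "z = collapse T \<alpha>"
    using assms by (auto simp: graph_quotient_def)
  then show ?thesis
    using loop_hom_generator label_loop by simp
qed

lemma label_loop_hom: "g \<in> carrier FGr \<Longrightarrow> \<Phi>.label (loop_hom g) = g"
proof -
  have "continuous_map \<tau> \<tau> (\<lambda>g. \<Phi>.label (loop_hom g))"
    using continuous_map_compose[OF continuous_map_loop_hom \<Phi>.continuous_map_label[OF v_obj v_obj]]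
    by (simp add: o_def)
  moreover have "(\<lambda>g. g) \<in> hom FGr FGr"
    by (rule homI) simp_all
  moreover have "continuous_map \<tau> \<tau> (\<lambda>g. g)"
    using continuous_map_id[unfolded id_def] .
  ultimately have "\<forall>g\<in>carrier FGr. \<Phi>.label (loop_hom g) = g"
    by (intro graev_free_group_universal(2)[OF graev topological_group continuous_\<sigma>s \<sigma>s_None,
          THEN spec[where x = "\<lambda>g. \<Phi>.label (loop_hom g)"], THEN spec[where x = "\<lambda>g. g"], THEN mp]
          conjI hom_label_loop_hom ballI label_loop_hom_generator refl)
  then show "g \<in> carrier FGr \<Longrightarrow> \<Phi>.label (loop_hom g) = g"
    by blast
qed

definition tree_conjugation :: "'m \<Rightarrow> 'm" where
  "tree_conjugation = path_conjugation FG tree_path loop_hom \<circ> labelling_functor"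

lemma cont_functor_tree_conjugation: "cont_functor FG FG id tree_conjugation"
proof -
  have "cont_functor (codiscrete_groupoid (obj FG) FGr \<tau>) FG id (path_conjugation FG tree_path loop_hom)"
    using FG.cont_functor_path_conjugation[OF topological_group v_obj _ loop_hom continuous_map_loop_hom]
      tree_path obj_FG by blast
  from cont_functor_compose[OF FG.top_groupoid top_groupoid_codiscrete_groupoid[OF topological_group]
      labelling_functor this[unfolded obj_FG]]
  show ?thesis
    by (simp add: tree_conjugation_def)
qed

lemma tree_conjugation_edge:
  assumes "\<alpha> \<in> topspace E"
  shows "tree_conjugation (\<sigma> \<alpha>) = \<sigma> \<alpha>"
proof -
  have ends: "d0 \<alpha> \<in> obj FG" "d1 \<alpha> \<in> obj FG"
    using topgraph_ends[OF topgraph assms] obj_FG by simp_all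
  have "tree_conjugation (\<sigma> \<alpha>) = comp FG (tree_path (d1 \<alpha>)) (comp FG (loop \<alpha>) (ginv FG (tree_path (d0 \<alpha>))))"
    using labelling_functor_edge[OF assms] loop_hom_generator[OF assms]
    by (simp add: tree_conjugation_def path_conjugation_def)
  also have "\<dots> = \<sigma> \<alpha>"
    unfolding edge_loop_def
    by (rule FG.path_conjugation_edge_loop[OF v_obj ends tree_path tree_path \<sigma>_Hom[OF assms]])
      (use ends obj_FG in simp_all)
  finally show ?thesis .
qed

lemma tree_conjugation_vertex_group:
  assumes "g \<in> Hom FG v v"
  shows "tree_conjugation g = loop_hom (\<Phi>.label g)"
proof -
  have "loop_hom (\<Phi>.label g) \<in> Hom FG v v"
    using loop_hom_Hom[OF \<Phi>.label_closed[OF v_obj v_obj assms]] .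
  then show ?thesis
    using \<Phi>.functor_eq[OF v_obj v_obj assms] FG.conjugate_ident[OF v_obj]
    by (simp add: tree_conjugation_def path_conjugation_def tree_path_base)
qed

text \<open>The tree conjugation fixes every generator \<open>\<sigma> \<alpha>\<close>, so it is the identity by freeness of \<open>FG\<close>.\<close>

lemma loop_hom_label:
  assumes "g \<in> Hom FG v v"
  shows "loop_hom (\<Phi>.label g) = g"
proof -
  have "cont_functor FG FG id (\<lambda>g. g)"
    unfolding cont_functor_def by (simp add: continuous_map_id[unfolded id_def])
  then have "\<forall>x\<in>V. \<forall>y\<in>V. \<forall>g\<in>Hom FG x y. tree_conjugation g = g"
    by (intro free_top_groupoid_universal(2)[OF free FG.top_groupoid \<sigma>_morphism,
          THEN spec[where x = tree_conjugation], THEN spec[where x = "\<lambda>g. g"], THEN mp]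
          conjI cont_functor_tree_conjugation ballI tree_conjugation_edge refl)
  then show ?thesis
    using v assms tree_conjugation_vertex_group[OF assms] by simp
qed

lemma vertex_group_isomorphic_graev:
  "top_group_isomorphic (vertex_group FG v) (homtop FG v v) FGr \<tau>"
proof (rule top_group_isomorphic_inverse[where \<psi> = loop_hom])
  show "topspace (homtop FG v v) = carrier (vertex_group FG v)"
    using v_obj by (simp add: FG.topspace_homtop vertex_group_def)
  show "topspace \<tau> = carrier FGr"
    using topological_group by (simp add: topological_group_def)
  show "\<Phi>.label \<in> hom (vertex_group FG v) FGr"
    using v_obj by (rule \<Phi>.label_hom)
  show "continuous_map (homtop FG v v) \<tau> \<Phi>.label"
    using v_obj v_obj by (rule \<Phi>.continuous_map_label)
  show "loop_hom (\<Phi>.label g) = g" if "g \<in> carrier (vertex_group FG v)" for g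
    using that loop_hom_label by (simp add: vertex_group_def)
qed (use continuous_map_loop_hom label_loop_hom in auto)

end

theorem theorem3p6:
  fixes V :: "'v set" and E :: "'e topology" and d0 d1 :: "'e \<Rightarrow> 'v"
    and T :: "'e set" and v :: 'v
    and FG :: "('v, 'm) tgpd" and \<sigma> :: "'e \<Rightarrow> 'm"
    and FGr :: "'f monoid" and \<tau> :: "'f topology" and \<sigma>s :: "'e option \<Rightarrow> 'f"
  assumes "connected_topgraph V E d0 d1"
    and "\<exists>x\<in>V. \<exists>y\<in>V. x \<noteq> y"
    and "maximal_tree V E d0 d1 T"
    and "T \<noteq> {}"
    and "v \<in> V"
    and "free_top_groupoid V E d0 d1 FG \<sigma> TYPE('v) TYPE('m)"
    and "free_top_groupoid V E d0 d1 FG \<sigma> TYPE('v) TYPE('v \<times> 'f \<times> 'v)"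
    and "graev_free_group (graph_quotient E T) None FGr \<tau> \<sigma>s TYPE('f)"
    and "graev_free_group (graph_quotient E T) None FGr \<tau> \<sigma>s TYPE('m)"
  shows "top_group_isomorphic (vertex_group FG v) (homtop FG v v) FGr \<tau>"
proof -
  interpret graev_comparison V E d0 d1 T v FG \<sigma> FGr \<tau> \<sigma>s
    using assms by unfold_locales (simp_all add: connected_topgraph_def)
  show ?thesis
    by (rule vertex_group_isomorphic_graev)
qed

end
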